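(* There is an absolute constant $c>0$ such that the following holds. Let $T$ be a directed tree with degree $d\ge 3$ and let $\ell\ge 1$ be the length of a longest directed path in $T$. Then the span of $T$ is at most $c\,(d-1)^{\ell}$; that is, the span of $T$ is in $O((d-1)^\ell)$.
   Context: A directed tree is a DAG (directed acyclic graph) whose underlying undirected graph is a tree. The degree of a vertex is its total number of incident edges; the degree of a graph is the maximum degree of its vertices. The length of a directed path is its number of edges. An upward-planar layered drawing of a DAG $G$ maps each vertex $v$ to a point in the plane whose y-coordinate $y(v)$ is an integer, and each edge $(u,v)$ (directed from tail $u$ to head $v$) to a strictly y-monotone curve going upward from $u$ to $v$ (so $y(u)<y(v)$), such that no two edges intersect except at common endpoints. The span of an edge $(u,v)$ in such a drawing $\Gamma$ is $y(v)-y(u)$; the span of $\Gamma$ is the maximum span of its edges; the span of an upward-planar DAG is the minimum span over all its upward-planar layered drawings (no embedding prescribed). *)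

theory Defs
  imports "HOL-Analysis.Analysis"
begin

text \<open>Directed graphs are given by a vertex set V and an edge set E of ordered pairs (tail, head).\<close>

definition directed_tree :: "'a set \<Rightarrow> ('a \<times> 'a) set \<Rightarrow> bool" where
  "directed_tree V E \<longleftrightarrow>
     finite V \<and> V \<noteq> {} \<and> E \<subseteq> V \<times> V \<and> acyclic E \<and>
     (\<forall>u\<in>V. \<forall>v\<in>V. (u, v) \<in> (E \<union> E\<inverse>)\<^sup>*) \<and>
     card E + 1 = card V"

definition vdegree :: "('a \<times> 'a) set \<Rightarrow> 'a \<Rightarrow> nat" where
  "vdegree E v = card {e \<in> E. fst e = v \<or> snd e = v}"

definition graph_degree :: "'a set \<Rightarrow> ('a \<times> 'a) set \<Rightarrow> nat" where
  "graph_degree V E = Max (vdegree E ` V)"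

definition dpath :: "'a set \<Rightarrow> ('a \<times> 'a) set \<Rightarrow> 'a list \<Rightarrow> bool" where
  "dpath V E p \<longleftrightarrow> p \<noteq> [] \<and> set p \<subseteq> V \<and> (\<forall>i < length p - 1. (p ! i, p ! Suc i) \<in> E)"

definition longest_path_length :: "'a set \<Rightarrow> ('a \<times> 'a) set \<Rightarrow> nat" where
  "longest_path_length V E = Max {length p - 1 | p. dpath V E p}"

definition upward_layered_drawing ::
  "'a set \<Rightarrow> ('a \<times> 'a) set \<Rightarrow> ('a \<Rightarrow> real) \<Rightarrow> ('a \<Rightarrow> int) \<Rightarrow> ('a \<times> 'a \<Rightarrow> real \<Rightarrow> real \<times> real) \<Rightarrow> bool" where
  "upward_layered_drawing V E px py g \<longleftrightarrow>
     inj_on (\<lambda>v. (px v, real_of_int (py v))) V \<and>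
     (\<forall>(u, v) \<in> E.
        path (g (u, v)) \<and>
        pathstart (g (u, v)) = (px u, real_of_int (py u)) \<and>
        pathfinish (g (u, v)) = (px v, real_of_int (py v)) \<and>
        strict_mono_on {0..1} (\<lambda>t. snd (g (u, v) t))) \<and>
     (\<forall>e \<in> E. \<forall>e' \<in> E. e \<noteq> e' \<longrightarrow>
        path_image (g e) \<inter> path_image (g e') \<subseteq>
          (\<lambda>v. (px v, real_of_int (py v))) ` ({fst e, snd e} \<inter> {fst e', snd e'}))"

definition drawing_span :: "('a \<times> 'a) set \<Rightarrow> ('a \<Rightarrow> int) \<Rightarrow> int" where
  "drawing_span E py = Max ((\<lambda>(u, v). py v - py u) ` E)"

definition upward_span :: "'a set \<Rightarrow> ('a \<times> 'a) set \<Rightarrow> nat" where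
  "upward_span V E = (LEAST s::nat. \<exists>px py g.
       upward_layered_drawing V E px py g \<and> drawing_span E py = int s)"

end

theory Submission
  imports Defs
begin

text \<open>
  The drawing is built by recursion on the tree, keeping a root r at the origin and the rest of
  the drawing strictly to the right of r and, below r, inside a cone. If r has an in-neighbour w,
  deleting the edge (w, r) splits the tree into a part containing r and a part containing w; the
  part of w is drawn to the right of the part of r and entirely below it, and the edge (w, r)
  enters r from below, just outside the cone. If r is a source with an out-neighbour u, the part
  of r lies above a line of positive slope through r, the part of u is drawn to the right of it
  and above the level of r, and the edge (r, u) leaves r below that line.

  If all directed paths ending at r have length at most h, the depth of the drawing below r is at
  most indeg r * (1 + depth_bound d (h - 1)), where depth_bound d h = (d - 1) * (1 + depth_bound d
  (h - 1)). In a part produced by a split, the root has lost one of its at most d edges, so this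
  depth is at most depth_bound d h. A new edge spans one more than the depth of one of the two
  parts, hence every span is at most depth_bound d l + 1 <= 2 * (d - 1) ^ l.
\<close>

section \<open>Splitting a directed tree at an edge\<close>

lemma card_le_Suc_card_if_connected:
  assumes fV: "finite V" and fE: "finite E" and a: "a \<in> V"
    and conn: "\<forall>v\<in>V. (a, v) \<in> (E \<union> E\<inverse>)\<^sup>*"
  shows "card V \<le> Suc (card E)"
proof -
  let ?U = "E \<union> E\<inverse>"
  define dist where "dist v = (LEAST n. (a, v) \<in> ?U ^^ n)" for v
  have "\<forall>v\<in>V - {a}. \<exists>e\<in>E. \<exists>p. (e = (p, v) \<or> e = (v, p)) \<and> dist p < dist v"
  proof (intro ballI)
    fix v assume v: "v \<in> V - {a}"
    obtain n where "(a, v) \<in> ?U ^^ n" using conn v rtrancl_power by blast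
    then have reach: "(a, v) \<in> ?U ^^ dist v" unfolding dist_def by (rule LeastI)
    then obtain m where m: "dist v = Suc m" using v by (cases "dist v") auto
    with reach obtain p where p: "(a, p) \<in> ?U ^^ m" "(p, v) \<in> ?U" by auto
    have "dist p \<le> m" unfolding dist_def using p(1) by (rule Least_le)
    with m have "dist p < dist v" by simp
    with p(2) show "\<exists>e\<in>E. \<exists>p. (e = (p, v) \<or> e = (v, p)) \<and> dist p < dist v" by blast
  qed
  then obtain parent_edge where pe: "\<forall>v\<in>V - {a}. parent_edge v \<in> E \<and>
      (\<exists>p. (parent_edge v = (p, v) \<or> parent_edge v = (v, p)) \<and> dist p < dist v)"
    by (metis bchoice)
  have inj: "inj_on parent_edge (V - {a})"
  proof (rule inj_onI)
    fix v v' assume v: "v \<in> V - {a}" and v': "v' \<in> V - {a}" and eq: "parent_edge v = parent_edge v'"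
    obtain p where p: "parent_edge v = (p, v) \<or> parent_edge v = (v, p)" "dist p < dist v"
      using pe v by blast
    obtain p' where p': "parent_edge v' = (p', v') \<or> parent_edge v' = (v', p')" "dist p' < dist v'"
      using pe v' by blast
    show "v = v'"
    proof (rule ccontr)
      assume "v \<noteq> v'"
      then have "v = p' \<and> v' = p" using p p' eq by auto
      then show False using p p' by simp
    qed
  qed
  have "parent_edge ` (V - {a}) \<subseteq> E" using pe by blast
  then have "card (V - {a}) \<le> card E" by (rule card_inj_on_le[OF inj _ fE])
  then show ?thesis using fV a by (simp add: card_Diff_singleton)
qed

lemma undirected_component:
  fixes F :: "('a \<times> 'a) set"
  assumes F: "F \<subseteq> V \<times> V" and a: "a \<in> V"
  defines "C \<equiv> {v. (a, v) \<in> (F \<union> F\<inverse>)\<^sup>*}"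
  defines "FC \<equiv> {e \<in> F. fst e \<in> C}"
  shows "C \<subseteq> V" and "FC \<subseteq> C \<times> C" and "\<forall>u\<in>C. \<forall>v\<in>C. (u, v) \<in> (FC \<union> FC\<inverse>)\<^sup>*"
proof -
  show "C \<subseteq> V"
  proof
    fix v assume "v \<in> C"
    then have "(a, v) \<in> (F \<union> F\<inverse>)\<^sup>*" unfolding C_def by simp
    then show "v \<in> V" by induction (use a F in auto)
  qed
  show FC: "FC \<subseteq> C \<times> C"
    unfolding FC_def C_def by (auto intro: rtrancl_into_rtrancl)
  have "(a, v) \<in> (FC \<union> FC\<inverse>)\<^sup>*" if "v \<in> C" for v
  proof -
    from that have "(a, v) \<in> (F \<union> F\<inverse>)\<^sup>*" unfolding C_def by simp
    then show ?thesis
    proof induction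
      case (step y z)
      then have "y \<in> C" "z \<in> C" unfolding C_def by (auto intro: rtrancl_into_rtrancl)
      then have "(y, z) \<in> FC \<union> FC\<inverse>" using step.hyps(2) unfolding FC_def by auto
      with step.IH show ?case by (rule rtrancl_into_rtrancl)
    qed simp
  qed
  then show "\<forall>u\<in>C. \<forall>v\<in>C. (u, v) \<in> (FC \<union> FC\<inverse>)\<^sup>*"
    by (meson rtrancl_trans sym_Un_converse sym_rtrancl symD)
qed

lemma reachable_without_edge:
  fixes a b :: 'a
  assumes "(a, v) \<in> (E \<union> E\<inverse>)\<^sup>*"
  defines "E' \<equiv> E - {(a, b)}"
  shows "(a, v) \<in> (E' \<union> E'\<inverse>)\<^sup>* \<or> (b, v) \<in> (E' \<union> E'\<inverse>)\<^sup>*"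
  using assms(1)
proof induction
  case (step y z)
  show ?case
  proof (cases "(y, z) \<in> E' \<union> E'\<inverse>")
    case True
    with step.IH show ?thesis by (auto intro: rtrancl_into_rtrancl)
  next
    case False
    with step.hyps(2) have "{y, z} = {a, b}" unfolding E'_def by auto
    then show ?thesis by auto
  qed
qed simp

lemma directed_tree_finite_edges: "directed_tree V E \<Longrightarrow> finite E"
  unfolding directed_tree_def by (meson finite_SigmaI finite_subset)

lemma directed_tree_edge_at:
  assumes T: "directed_tree V E" and r: "r \<in> V" and "E \<noteq> {}"
  shows "\<exists>v. (v, r) \<in> E \<or> (r, v) \<in> E"
proof -
  have "0 < card E" using \<open>E \<noteq> {}\<close> directed_tree_finite_edges[OF T] by (simp add: card_gt_0_iff)
  then have "0 < card (V - {r})" using T r unfolding directed_tree_def by (simp add: card_Diff_singleton)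
  then obtain v where v: "v \<in> V" "v \<noteq> r" by (metis Diff_iff card.empty ex_in_conv less_irrefl singletonI)
  then have "(r, v) \<in> (E \<union> E\<inverse>)\<^sup>*" using T r unfolding directed_tree_def by blast
  then obtain z where "(r, z) \<in> E \<union> E\<inverse>" using v(2) by (cases rule: converse_rtranclE) auto
  then show ?thesis by auto
qed

lemma directed_tree_split:
  assumes T: "directed_tree V E" and ab: "(a, b) \<in> E"
  obtains Va Ea Vb Eb where "directed_tree Va Ea" "directed_tree Vb Eb" "a \<in> Va" "b \<in> Vb"
    "Va \<inter> Vb = {}" "V = Va \<union> Vb" "E = insert (a, b) (Ea \<union> Eb)" "(a, b) \<notin> Ea \<union> Eb"
proof -
  from T have fV: "finite V" and EV: "E \<subseteq> V \<times> V" and acyc: "acyclic E"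
    and conn: "\<forall>u\<in>V. \<forall>v\<in>V. (u, v) \<in> (E \<union> E\<inverse>)\<^sup>*" and cardE: "card E + 1 = card V"
    unfolding directed_tree_def by auto
  have fE: "finite E" using T by (rule directed_tree_finite_edges)
  have aV: "a \<in> V" and bV: "b \<in> V" using ab EV by auto
  define E' where "E' = E - {(a, b)}"
  let ?U = "E' \<union> E'\<inverse>"
  define Va where "Va = {v. (a, v) \<in> ?U\<^sup>*}"
  define Vb where "Vb = {v. (b, v) \<in> ?U\<^sup>*}"
  define Ea where "Ea = {e \<in> E'. fst e \<in> Va}"
  define Eb where "Eb = {e \<in> E'. fst e \<in> Vb}"
  have E'V: "E' \<subseteq> V \<times> V" using EV unfolding E'_def by blast
  have fE': "finite E'" using fE unfolding E'_def by simp
  have cardE': "Suc (card E') = card E" unfolding E'_def by (rule card_Suc_Diff1[OF fE ab])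
  note compa = undirected_component[OF E'V aV, folded Va_def Ea_def]
  note compb = undirected_component[OF E'V bV, folded Vb_def Eb_def]
  have aVa: "a \<in> Va" and bVb: "b \<in> Vb" unfolding Va_def Vb_def by auto
  have "v \<in> Va \<union> Vb" if "(a, v) \<in> (E \<union> E\<inverse>)\<^sup>*" for v
    using reachable_without_edge[OF that, of b] unfolding Va_def Vb_def E'_def by blast
  then have Vun: "V = Va \<union> Vb" using conn aV compa(1) compb(1) by blast
  have disj: "Va \<inter> Vb = {}"
  proof (rule ccontr)
    \<comment> \<open>if a and b stay connected without the edge (a, b), then V has too few edges\<close>
    assume "Va \<inter> Vb \<noteq> {}"
    then obtain v where "(a, v) \<in> ?U\<^sup>*" "(b, v) \<in> ?U\<^sup>*" unfolding Va_def Vb_def by auto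
    then have "(a, b) \<in> ?U\<^sup>*" by (meson rtrancl_trans sym_Un_converse sym_rtrancl symD)
    then have "\<forall>v\<in>V. (a, v) \<in> ?U\<^sup>*" using Vun unfolding Va_def Vb_def by (auto intro: rtrancl_trans)
    from card_le_Suc_card_if_connected[OF fV fE' aV this] cardE cardE' show False by simp
  qed
  have fVa: "finite Va" and fVb: "finite Vb" using Vun fV by auto
  have E'un: "E' = Ea \<union> Eb" using E'V Vun unfolding Ea_def Eb_def by auto
  have "Ea \<inter> Eb = {}" using disj unfolding Ea_def Eb_def by auto
  then have "card E' = card Ea + card Eb" using E'un fE' by (simp add: card_Un_disjoint)
  moreover have "card V = card Va + card Vb" using Vun disj fVa fVb by (simp add: card_Un_disjoint)
  moreover have "card Va \<le> Suc (card Ea)" "card Vb \<le> Suc (card Eb)"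
    using card_le_Suc_card_if_connected[of Va Ea a] card_le_Suc_card_if_connected[of Vb Eb b]
      compa compb fVa fVb aVa bVb fE' E'un by auto
  ultimately have "card Ea + 1 = card Va" "card Eb + 1 = card Vb" using cardE cardE' by linarith+
  moreover have "acyclic Ea" "acyclic Eb"
    using acyclic_subset[OF acyc] E'un unfolding E'_def by auto
  ultimately have "directed_tree Va Ea" "directed_tree Vb Eb"
    unfolding directed_tree_def using compa compb fVa fVb aVa bVb by auto
  moreover have "E = insert (a, b) (Ea \<union> Eb)" "(a, b) \<notin> Ea \<union> Eb"
    using E'un ab unfolding E'_def by auto
  ultimately show ?thesis using that aVa bVb disj Vun by blast
qed

section \<open>Directed paths, in-degrees and the depth bound\<close>

lemma dpath_mono: "dpath V' E' p \<Longrightarrow> V' \<subseteq> V \<Longrightarrow> E' \<subseteq> E \<Longrightarrow> dpath V E p"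
  unfolding dpath_def by auto

lemma dpath_edge: "(x, y) \<in> E \<Longrightarrow> x \<in> V \<Longrightarrow> y \<in> V \<Longrightarrow> dpath V E [x, y]"
  unfolding dpath_def by (simp add: less_one)

lemma dpath_snoc:
  assumes p: "dpath V E p" and x: "(last p, x) \<in> E" "x \<in> V"
  shows "dpath V E (p @ [x])"
  unfolding dpath_def
proof (intro conjI allI impI)
  show "set (p @ [x]) \<subseteq> V" using p x unfolding dpath_def by auto
  fix i assume i: "i < length (p @ [x]) - 1"
  show "((p @ [x]) ! i, (p @ [x]) ! Suc i) \<in> E"
  proof (cases "i < length p - 1")
    case True
    then show ?thesis using p unfolding dpath_def by (auto simp: nth_append)
  next
    case False
    with i p have "i = length p - 1" "p \<noteq> []" unfolding dpath_def by auto
    then show ?thesis using x by (auto simp: nth_append last_conv_nth)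
  qed
qed simp

lemma dpath_nth_trancl:
  assumes "dpath V E p" "i < j" "j < length p"
  shows "(p ! i, p ! j) \<in> E\<^sup>+"
  using assms(2,3)
proof (induction j)
  case (Suc j)
  have "(p ! j, p ! Suc j) \<in> E" using assms(1) Suc.prems(2) unfolding dpath_def by auto
  then show ?case using Suc by (cases "i = j") auto
qed simp

lemma dpath_distinct:
  assumes "acyclic E" "dpath V E p"
  shows "distinct p"
  unfolding distinct_conv_nth
proof (intro allI impI)
  fix i j assume "i < length p" "j < length p" "i \<noteq> j"
  then have "(p ! min i j, p ! max i j) \<in> E\<^sup>+" using dpath_nth_trancl[OF assms(2)] by simp
  then show "p ! i \<noteq> p ! j" using assms(1) unfolding acyclic_def by (metis max_def min_def)
qed

lemma finite_dpath_lengths: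
  assumes "finite V" "acyclic E"
  shows "finite {length p - 1 | p. dpath V E p}"
proof -
  have "length p - 1 \<le> card V" if p: "dpath V E p" for p
  proof -
    have "card (set p) \<le> card V" using p assms(1) unfolding dpath_def by (simp add: card_mono)
    then show ?thesis using dpath_distinct[OF assms(2) p] distinct_card by fastforce
  qed
  then show ?thesis by (auto intro: finite_subset[of _ "{..card V}"])
qed

lemma dpath_length_le_longest_path_length:
  assumes "finite V" "acyclic E" "dpath V E p"
  shows "length p - 1 \<le> longest_path_length V E"
  unfolding longest_path_length_def using finite_dpath_lengths[OF assms(1,2)] assms(3)
  by (auto intro: Max_ge)

lemma longest_path_length_attained:
  assumes "finite V" "acyclic E" "v \<in> V"
  obtains p where "dpath V E p" "length p - 1 = longest_path_length V E"
proof -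
  have "dpath V E [v]" using assms(3) unfolding dpath_def by simp
  then have "{length p - 1 | p. dpath V E p} \<noteq> {}" by blast
  from Max_in[OF finite_dpath_lengths[OF assms(1,2)] this]
  obtain p where "dpath V E p" "Max {length p - 1 | p. dpath V E p} = length p - 1" by auto
  then show ?thesis using that unfolding longest_path_length_def by simp
qed

definition indeg :: "('a \<times> 'a) set \<Rightarrow> 'a \<Rightarrow> nat" where
  "indeg E v = card {e \<in> E. snd e = v}"

lemma vdegree_mono: "finite E \<Longrightarrow> E' \<subseteq> E \<Longrightarrow> vdegree E' v \<le> vdegree E v"
  unfolding vdegree_def by (rule card_mono) auto

lemma indeg_less_vdegree:
  assumes "finite E" "E' \<subseteq> E" "e \<in> E - E'" "v = fst e \<or> v = snd e"
  shows "indeg E' v < vdegree E v"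
proof -
  have "{e \<in> E'. snd e = v} \<subset> {e \<in> E. fst e = v \<or> snd e = v}" using assms(2-4) by blast
  then show ?thesis unfolding indeg_def vdegree_def using assms(1) by (simp add: psubset_card_mono)
qed

lemma indeg_eq_0_iff: "finite E \<Longrightarrow> indeg E v = 0 \<longleftrightarrow> (\<forall>u. (u, v) \<notin> E)"
  unfolding indeg_def by auto

fun depth_bound :: "nat \<Rightarrow> nat \<Rightarrow> nat" where
  "depth_bound d 0 = 0"
| "depth_bound d (Suc h) = (d - 1) * (1 + depth_bound d h)"

lemma depth_bound_mono:
  assumes "2 \<le> d" "h \<le> h'"
  shows "depth_bound d h \<le> depth_bound d h'"
  using assms(2)
proof (induction h' rule: dec_induct)
  case (step h')
  have "1 * (1 + depth_bound d h') \<le> (d - 1) * (1 + depth_bound d h')"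
    using assms(1) by (intro mult_le_mono1) simp
  with step.IH show ?case by simp
qed simp

lemma le_depth_bound:
  assumes "L \<le> k * (1 + depth_bound d (h - 1))" "k \<le> d - 1" "0 < k \<Longrightarrow> 0 < h"
  shows "L \<le> depth_bound d h"
proof (cases "k = 0")
  case False
  then obtain h' where "h = Suc h'" using assms(3) gr0_implies_Suc by blast
  have "k * (1 + depth_bound d h') \<le> (d - 1) * (1 + depth_bound d h')"
    using assms(2) by (rule mult_le_mono1)
  with assms(1) \<open>h = Suc h'\<close> show ?thesis by simp
qed (use assms(1) in simp)

lemma depth_bound_le_power:
  assumes "3 \<le> d"
  shows "depth_bound d h + 2 \<le> 2 * (d - 1) ^ h"
proof (induction h)
  case (Suc h)
  have "(d - 1) * (1 + depth_bound d h) + 2 \<le> (d - 1) * (depth_bound d h + 2)"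
    using assms by (simp add: algebra_simps)
  also have "\<dots> \<le> (d - 1) * (2 * (d - 1) ^ h)" using Suc.IH by (rule mult_le_mono2)
  finally show ?case by simp
qed simp

section \<open>Proper drawings and how to combine them\<close>

definition vertex_point :: "('a \<Rightarrow> real) \<Rightarrow> ('a \<Rightarrow> int) \<Rightarrow> 'a \<Rightarrow> real \<times> real" where
  "vertex_point px py v = (px v, real_of_int (py v))"

definition upward_curve :: "(real \<Rightarrow> real \<times> real) \<Rightarrow> real \<times> real \<Rightarrow> real \<times> real \<Rightarrow> bool" where
  "upward_curve \<gamma> P Q \<longleftrightarrow> path \<gamma> \<and> pathstart \<gamma> = P \<and> pathfinish \<gamma> = Q \<and>
     strict_mono_on {0..1} (\<lambda>t. snd (\<gamma> t))"

definition drawing_points :: "'a set \<Rightarrow> ('a \<times> 'a) set \<Rightarrow> ('a \<Rightarrow> real) \<Rightarrow> ('a \<Rightarrow> int) \<Rightarrow>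
    ('a \<times> 'a \<Rightarrow> real \<Rightarrow> real \<times> real) \<Rightarrow> (real \<times> real) set" where
  "drawing_points V E px py g = vertex_point px py ` V \<union> (\<Union>e\<in>E. path_image (g e))"

text \<open>Excluding edges through other vertices is what allows a new edge that meets a drawing only at
  its endpoints to be added to it (\<open>proper_drawing_insert_edge\<close>).\<close>

definition proper_drawing :: "'a set \<Rightarrow> ('a \<times> 'a) set \<Rightarrow> ('a \<Rightarrow> real) \<Rightarrow> ('a \<Rightarrow> int) \<Rightarrow>
    ('a \<times> 'a \<Rightarrow> real \<Rightarrow> real \<times> real) \<Rightarrow> bool" where
  "proper_drawing V E px py g \<longleftrightarrow> upward_layered_drawing V E px py g \<and>
     (\<forall>e\<in>E. \<forall>v\<in>V. vertex_point px py v \<in> path_image (g e) \<longrightarrow> v = fst e \<or> v = snd e)"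

lemma upward_layered_drawing_iff:
  "upward_layered_drawing V E px py g \<longleftrightarrow> inj_on (vertex_point px py) V \<and>
     (\<forall>(u, v)\<in>E. upward_curve (g (u, v)) (vertex_point px py u) (vertex_point px py v)) \<and>
     (\<forall>e\<in>E. \<forall>e'\<in>E. e \<noteq> e' \<longrightarrow>
        path_image (g e) \<inter> path_image (g e') \<subseteq> vertex_point px py ` ({fst e, snd e} \<inter> {fst e', snd e'}))"
proof -
  have "vertex_point px py = (\<lambda>v. (px v, real_of_int (py v)))" by (rule ext) (simp add: vertex_point_def)
  then show ?thesis unfolding upward_layered_drawing_def upward_curve_def by simp
qed

lemma proper_drawingI:
  assumes "inj_on (vertex_point px py) V"
    and "\<And>u v. (u, v) \<in> E \<Longrightarrow> upward_curve (g (u, v)) (vertex_point px py u) (vertex_point px py v)"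
    and "\<And>e e'. e \<in> E \<Longrightarrow> e' \<in> E \<Longrightarrow> e \<noteq> e' \<Longrightarrow>
      path_image (g e) \<inter> path_image (g e') \<subseteq> vertex_point px py ` ({fst e, snd e} \<inter> {fst e', snd e'})"
    and "\<And>e v. e \<in> E \<Longrightarrow> v \<in> V \<Longrightarrow> vertex_point px py v \<in> path_image (g e) \<Longrightarrow> v = fst e \<or> v = snd e"
  shows "proper_drawing V E px py g"
  using assms unfolding proper_drawing_def upward_layered_drawing_iff by fast

lemma proper_drawingD:
  assumes "proper_drawing V E px py g"
  shows "inj_on (vertex_point px py) V"
    and "(u, v) \<in> E \<Longrightarrow> upward_curve (g (u, v)) (vertex_point px py u) (vertex_point px py v)"
    and "e \<in> E \<Longrightarrow> e' \<in> E \<Longrightarrow> e \<noteq> e' \<Longrightarrow>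
      path_image (g e) \<inter> path_image (g e') \<subseteq> vertex_point px py ` ({fst e, snd e} \<inter> {fst e', snd e'})"
    and "e \<in> E \<Longrightarrow> v \<in> V \<Longrightarrow> vertex_point px py v \<in> path_image (g e) \<Longrightarrow> v = fst e \<or> v = snd e"
  using assms unfolding proper_drawing_def upward_layered_drawing_iff by fast+

lemma drawing_points_subset:
  "vertex_point px py ` V \<subseteq> drawing_points V E px py g"
  "e \<in> E \<Longrightarrow> path_image (g e) \<subseteq> drawing_points V E px py g"
  unfolding drawing_points_def by auto

lemma proper_drawing_cong:
  assumes D: "proper_drawing V E px py g" and EV: "E \<subseteq> V \<times> V"
    and agree: "\<forall>v\<in>V. px' v = px v \<and> py' v = py v" "\<forall>e\<in>E. g' e = g e"
  shows "proper_drawing V E px' py' g'"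
    and "drawing_points V E px' py' g' = drawing_points V E px py g"
proof -
  have vp: "vertex_point px' py' v = vertex_point px py v" if "v \<in> V" for v
    using agree(1) that unfolding vertex_point_def by simp
  have img: "vertex_point px' py' ` A = vertex_point px py ` A" if "A \<subseteq> V" for A
    using vp that by (intro image_cong) auto
  note D = proper_drawingD[OF D]
  show "proper_drawing V E px' py' g'"
  proof (rule proper_drawingI)
    have "inj_on (vertex_point px' py') V \<longleftrightarrow> inj_on (vertex_point px py) V"
      by (rule inj_on_cong) (rule vp)
    with D(1) show "inj_on (vertex_point px' py') V" by simp
  next
    fix u v assume "(u, v) \<in> E"
    moreover from this have "u \<in> V" "v \<in> V" using EV by auto
    ultimately show "upward_curve (g' (u, v)) (vertex_point px' py' u) (vertex_point px' py' v)"
      using D(2) agree(2) vp by auto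
  next
    fix e e' assume "e \<in> E" "e' \<in> E" "e \<noteq> e'"
    moreover from this have "{fst e, snd e} \<inter> {fst e', snd e'} \<subseteq> V" using EV by auto
    ultimately show "path_image (g' e) \<inter> path_image (g' e') \<subseteq>
        vertex_point px' py' ` ({fst e, snd e} \<inter> {fst e', snd e'})"
      using D(3) agree(2) img by simp
  next
    fix e v assume "e \<in> E" "v \<in> V" "vertex_point px' py' v \<in> path_image (g' e)"
    then show "v = fst e \<or> v = snd e" using D(4) agree(2) vp by auto
  qed
  show "drawing_points V E px' py' g' = drawing_points V E px py g"
    unfolding drawing_points_def using img agree(2) by simp
qed

lemma upward_curve_translate:
  assumes "upward_curve \<gamma> P Q"
  shows "upward_curve (\<lambda>t. \<gamma> t + c) (P + c) (Q + c)"
  using assms unfolding upward_curve_def path_def pathstart_def pathfinish_def strict_mono_on_def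
  by (auto intro: continuous_intros)

lemma proper_drawing_translate:
  fixes X :: real and Y :: int
  defines "\<tau> \<equiv> \<lambda>p. p + (X, real_of_int Y)"
  assumes D: "proper_drawing V E px py g"
  shows "proper_drawing V E (\<lambda>v. px v + X) (\<lambda>v. py v + Y) (\<lambda>e t. \<tau> (g e t))"
    and "drawing_points V E (\<lambda>v. px v + X) (\<lambda>v. py v + Y) (\<lambda>e t. \<tau> (g e t)) =
      \<tau> ` drawing_points V E px py g"
proof -
  have inj: "inj \<tau>" unfolding \<tau>_def by (rule injI) simp
  have vp: "vertex_point (\<lambda>v. px v + X) (\<lambda>v. py v + Y) = \<tau> \<circ> vertex_point px py"
    unfolding vertex_point_def \<tau>_def by auto
  have img: "path_image (\<lambda>t. \<tau> (g e t)) = \<tau> ` path_image (g e)" for e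
    unfolding path_image_def by auto
  note D = proper_drawingD[OF D]
  let ?P' = "vertex_point (\<lambda>v. px v + X) (\<lambda>v. py v + Y)"
  show "proper_drawing V E (\<lambda>v. px v + X) (\<lambda>v. py v + Y) (\<lambda>e t. \<tau> (g e t))"
  proof (rule proper_drawingI)
    show "inj_on ?P' V" unfolding vp using D(1) inj by (simp add: comp_inj_on inj_on_subset)
  next
    fix u v assume "(u, v) \<in> E"
    then show "upward_curve (\<lambda>t. \<tau> (g (u, v) t)) (?P' u) (?P' v)"
      unfolding vp using upward_curve_translate D(2) unfolding \<tau>_def by simp
  next
    fix e e' assume "e \<in> E" "e' \<in> E" "e \<noteq> e'"
    then show "path_image (\<lambda>t. \<tau> (g e t)) \<inter> path_image (\<lambda>t. \<tau> (g e' t)) \<subseteq>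
        ?P' ` ({fst e, snd e} \<inter> {fst e', snd e'})"
      unfolding vp img image_comp[symmetric] image_Int[OF inj, symmetric] by (intro image_mono D(3))
  next
    fix e v assume "e \<in> E" "v \<in> V" "?P' v \<in> path_image (\<lambda>t. \<tau> (g e t))"
    then show "v = fst e \<or> v = snd e" unfolding vp img using D(4) by (simp add: inj_image_mem_iff[OF inj])
  qed
  show "drawing_points V E (\<lambda>v. px v + X) (\<lambda>v. py v + Y) (\<lambda>e t. \<tau> (g e t)) =
      \<tau> ` drawing_points V E px py g"
    unfolding drawing_points_def vp img by (simp add: image_Un image_UN image_comp)
qed

lemma drawing_points_Un:
  "drawing_points (V1 \<union> V2) (E1 \<union> E2) px py g = drawing_points V1 E1 px py g \<union> drawing_points V2 E2 px py g"
  unfolding drawing_points_def by auto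

lemma proper_drawing_Un:
  assumes D1: "proper_drawing V1 E1 px py g" and D2: "proper_drawing V2 E2 px py g"
    and disj: "drawing_points V1 E1 px py g \<inter> drawing_points V2 E2 px py g = {}"
  shows "proper_drawing (V1 \<union> V2) (E1 \<union> E2) px py g"
proof (rule proper_drawingI)
  let ?P = "vertex_point px py"
  note in1 = drawing_points_subset[where px = px and py = py and V = V1 and E = E1 and g = g]
    and in2 = drawing_points_subset[where px = px and py = py and V = V2 and E = E2 and g = g]
  note D1 = proper_drawingD[OF D1] and D2 = proper_drawingD[OF D2]
  have "?P ` (V1 - V2) \<inter> ?P ` (V2 - V1) = {}" using in1(1) in2(1) disj by blast
  then show "inj_on ?P (V1 \<union> V2)" using D1(1) D2(1) by (simp add: inj_on_Un)
  show "upward_curve (g (u, v)) (?P u) (?P v)" if "(u, v) \<in> E1 \<union> E2" for u v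
    using that D1(2) D2(2) by blast
  have apart: "path_image (g e) \<inter> path_image (g e') = {}" if "e \<in> E1" "e' \<in> E2" for e e'
    using in1(2)[OF that(1)] in2(2)[OF that(2)] disj by blast
  show "path_image (g e) \<inter> path_image (g e') \<subseteq> ?P ` ({fst e, snd e} \<inter> {fst e', snd e'})"
    if edges: "e \<in> E1 \<union> E2" "e' \<in> E1 \<union> E2" "e \<noteq> e'" for e e'
  proof -
    consider "e \<in> E1" "e' \<in> E1" | "e \<in> E2" "e' \<in> E2" | "e \<in> E1" "e' \<in> E2" | "e' \<in> E1" "e \<in> E2"
      using edges(1,2) by blast
    then show ?thesis
    proof cases
      case 1
      then show ?thesis using D1(3) edges(3) by blast
    next
      case 2
      then show ?thesis using D2(3) edges(3) by blast
    next
      case 3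
      then show ?thesis using apart by blast
    next
      case 4
      then show ?thesis using apart[of e' e] by blast
    qed
  qed
  show "v = fst e \<or> v = snd e" if "e \<in> E1 \<union> E2" "v \<in> V1 \<union> V2" "?P v \<in> path_image (g e)" for e v
  proof -
    have "?P v \<notin> path_image (g e)" if "e \<in> E1 \<and> v \<in> V2 \<or> e \<in> E2 \<and> v \<in> V1"
      using that in1 in2 disj by blast
    then show ?thesis using that D1(4) D2(4) by blast
  qed
qed

lemma proper_drawing_insert_edge:
  assumes D: "proper_drawing V E px py g" and e: "fst e \<in> V" "snd e \<in> V" "e \<notin> E"
    and \<gamma>: "upward_curve \<gamma> (vertex_point px py (fst e)) (vertex_point px py (snd e))"
    and meet: "path_image \<gamma> \<inter> drawing_points V E px py g \<subseteq> vertex_point px py ` {fst e, snd e}"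
  shows "proper_drawing V (insert e E) px py (g(e := \<gamma>))"
    and "drawing_points V (insert e E) px py (g(e := \<gamma>)) = drawing_points V E px py g \<union> path_image \<gamma>"
proof -
  let ?P = "vertex_point px py"
  note inD = drawing_points_subset[where px = px and py = py and V = V and E = E and g = g]
    and D = proper_drawingD[OF D]
  have new_cross: "path_image \<gamma> \<inter> path_image (g e') \<subseteq> ?P ` ({fst e, snd e} \<inter> {fst e', snd e'})"
    if "e' \<in> E" for e'
  proof
    fix p assume p: "p \<in> path_image \<gamma> \<inter> path_image (g e')"
    with meet inD(2)[OF that] obtain v where v: "v \<in> {fst e, snd e}" "p = ?P v" by blast
    then have "v \<in> {fst e', snd e'}" using D(4)[OF that] e p by auto
    with v show "p \<in> ?P ` ({fst e, snd e} \<inter> {fst e', snd e'})" by blast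
  qed
  show "proper_drawing V (insert e E) px py (g(e := \<gamma>))"
  proof (rule proper_drawingI)
    show "inj_on ?P V" by (rule D(1))
    show "upward_curve ((g(e := \<gamma>)) (u, v)) (?P u) (?P v)" if "(u, v) \<in> insert e E" for u v
      using that \<gamma> D(2) e(3) by auto
  next
    fix e1 e2 assume "e1 \<in> insert e E" "e2 \<in> insert e E" "e1 \<noteq> e2"
    then consider "e1 = e" "e2 \<in> E" | "e2 = e" "e1 \<in> E" | "e1 \<in> E" "e2 \<in> E" "e1 \<noteq> e" "e2 \<noteq> e" by blast
    then show "path_image ((g(e := \<gamma>)) e1) \<inter> path_image ((g(e := \<gamma>)) e2) \<subseteq>
        ?P ` ({fst e1, snd e1} \<inter> {fst e2, snd e2})"
    proof cases
      case 1
      then show ?thesis using new_cross e(3) by auto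
    next
      case 2
      then show ?thesis using new_cross[of e1] e(3) by (auto simp: Int_commute)
    next
      case 3
      then show ?thesis using D(3) \<open>e1 \<noteq> e2\<close> by simp
    qed
  next
    fix e' v assume e': "e' \<in> insert e E" and v: "v \<in> V" "?P v \<in> path_image ((g(e := \<gamma>)) e')"
    show "v = fst e' \<or> v = snd e'"
    proof (cases "e' = e")
      case True
      with meet v inD(1) obtain u where "u \<in> {fst e, snd e}" "?P v = ?P u" by auto
      then show ?thesis using D(1) e v(1) True by (auto dest: inj_onD)
    next
      case False
      with e' v D(4) show ?thesis by simp
    qed
  qed
  have "(\<Union>e'\<in>E. path_image ((g(e := \<gamma>)) e')) = (\<Union>e'\<in>E. path_image (g e'))"
  proof (rule SUP_cong[OF refl])
    fix e' assume "e' \<in> E"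
    with e(3) show "path_image ((g(e := \<gamma>)) e') = path_image (g e')" by auto
  qed
  then show "drawing_points V (insert e E) px py (g(e := \<gamma>)) = drawing_points V E px py g \<union> path_image \<gamma>"
    unfolding drawing_points_def by (simp add: Un_ac)
qed

lemma proper_drawing_join:
  fixes X :: real and Y :: int and \<gamma> :: "real \<Rightarrow> real \<times> real"
  assumes D1: "proper_drawing V1 E1 px1 py1 g1" and D2: "proper_drawing V2 E2 px2 py2 g2"
    and E1: "E1 \<subseteq> V1 \<times> V1" and E2: "E2 \<subseteq> V2 \<times> V2" and disjV: "V1 \<inter> V2 = {}"
    and e: "e = (x, y) \<or> e = (y, x)" "x \<in> V1" "y \<in> V2"
  defines "\<tau> \<equiv> \<lambda>p. p + (X, real_of_int Y)"
  defines "px \<equiv> \<lambda>v. if v \<in> V1 then px1 v else px2 v + X"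
    and "py \<equiv> \<lambda>v. if v \<in> V1 then py1 v else py2 v + Y"
    and "g \<equiv> (\<lambda>e'. if e' \<in> E1 then g1 e' else (\<lambda>t. \<tau> (g2 e' t)))(e := \<gamma>)"
  assumes \<gamma>: "upward_curve \<gamma> (vertex_point px py (fst e)) (vertex_point px py (snd e))"
    and disjD: "drawing_points V1 E1 px1 py1 g1 \<inter> \<tau> ` drawing_points V2 E2 px2 py2 g2 = {}"
    and meet1: "path_image \<gamma> \<inter> drawing_points V1 E1 px1 py1 g1 \<subseteq> {vertex_point px1 py1 x}"
    and meet2: "path_image \<gamma> \<inter> \<tau> ` drawing_points V2 E2 px2 py2 g2 \<subseteq> {\<tau> (vertex_point px2 py2 y)}"
  shows "proper_drawing (V1 \<union> V2) (insert e (E1 \<union> E2)) px py g"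
    and "drawing_points (V1 \<union> V2) (insert e (E1 \<union> E2)) px py g =
      drawing_points V1 E1 px1 py1 g1 \<union> \<tau> ` drawing_points V2 E2 px2 py2 g2 \<union> path_image \<gamma>"
proof -
  define g0 where "g0 = (\<lambda>e'. if e' \<in> E1 then g1 e' else (\<lambda>t. \<tau> (g2 e' t)))"
  have E12: "E1 \<inter> E2 = {}" using E1 E2 disjV by blast
  have P1: "proper_drawing V1 E1 px py g0"
    and DP1: "drawing_points V1 E1 px py g0 = drawing_points V1 E1 px1 py1 g1"
    using proper_drawing_cong[OF D1 E1, of px py g0] unfolding px_def py_def g0_def by auto
  have agree2: "\<forall>v\<in>V2. px v = px2 v + X \<and> py v = py2 v + Y"
    "\<forall>e'\<in>E2. g0 e' = (\<lambda>t. g2 e' t + (X, real_of_int Y))"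
    using disjV E12 unfolding px_def py_def g0_def \<tau>_def by auto
  note translated = proper_drawing_translate[OF D2, of X Y]
  have P2: "proper_drawing V2 E2 px py g0"
    and DP2: "drawing_points V2 E2 px py g0 = \<tau> ` drawing_points V2 E2 px2 py2 g2"
    using proper_drawing_cong[OF translated(1) E2 agree2] translated(2) unfolding \<tau>_def by simp_all
  have x: "vertex_point px py x = vertex_point px1 py1 x"
    and y: "vertex_point px py y = \<tau> (vertex_point px2 py2 y)"
    using e disjV unfolding vertex_point_def px_def py_def \<tau>_def by auto
  have P12: "proper_drawing (V1 \<union> V2) (E1 \<union> E2) px py g0"
    using proper_drawing_Un[OF P1 P2] disjD DP1 DP2 by simp
  have "e \<notin> E1 \<union> E2" using e E1 E2 disjV by blast
  moreover have "fst e \<in> V1 \<union> V2" "snd e \<in> V1 \<union> V2" using e by auto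
  moreover have "path_image \<gamma> \<inter> drawing_points (V1 \<union> V2) (E1 \<union> E2) px py g0 \<subseteq>
      vertex_point px py ` {fst e, snd e}"
    using meet1 meet2 e(1) x y unfolding drawing_points_Un DP1 DP2 by auto
  ultimately show "proper_drawing (V1 \<union> V2) (insert e (E1 \<union> E2)) px py g"
    and "drawing_points (V1 \<union> V2) (insert e (E1 \<union> E2)) px py g =
      drawing_points V1 E1 px1 py1 g1 \<union> \<tau> ` drawing_points V2 E2 px2 py2 g2 \<union> path_image \<gamma>"
    using proper_drawing_insert_edge[OF P12 _ _ _ \<gamma>] unfolding g_def g0_def[symmetric]
    by (simp_all add: drawing_points_Un DP1 DP2)
qed

section \<open>Attaching a subtree below or above the root\<close>

lemma closed_segment_coords:
  fixes A B :: "real \<times> real"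
  assumes "p \<in> closed_segment A B"
  obtains u where "0 \<le> u" "u \<le> 1" "fst p = (1 - u) * fst A + u * fst B" "snd p = (1 - u) * snd A + u * snd B"
  using assms unfolding closed_segment_def by auto

lemma upward_curve_polyline:
  fixes A B C :: "real \<times> real"
  assumes AB: "snd A < snd B" and BC: "snd B < snd C"
  shows "upward_curve (linepath A B +++ linepath B C) A C"
    and "path_image (linepath A B +++ linepath B C) = closed_segment A B \<union> closed_segment B C"
proof -
  have lin: "snd (linepath P Q t) = snd P + t * (snd Q - snd P)" for P Q :: "real \<times> real" and t
    unfolding linepath_def by (simp add: algebra_simps)
  have "strict_mono_on {0..1} (\<lambda>t. snd ((linepath A B +++ linepath B C) t))"
  proof (rule strict_mono_onI)
    fix s t :: real assume "s \<in> {0..1}" "t \<in> {0..1}" "s < t"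
    moreover have "snd A + (2 * s) * (snd B - snd A) < snd A + (2 * t) * (snd B - snd A)"
      and "snd B + (2 * s - 1) * (snd C - snd B) < snd B + (2 * t - 1) * (snd C - snd B)"
      using \<open>s < t\<close> AB BC by simp_all
    moreover have "(2 * s) * (snd B - snd A) \<le> 1 * (snd B - snd A)" if "s \<le> 1/2"
      using that AB by (intro mult_right_mono) auto
    moreover have "snd B < snd B + (2 * t - 1) * (snd C - snd B)" if "1/2 < t"
      using that BC by simp
    ultimately show "snd ((linepath A B +++ linepath B C) s) < snd ((linepath A B +++ linepath B C) t)"
      unfolding joinpaths_def by (auto simp: lin)
  qed
  then show "upward_curve (linepath A B +++ linepath B C) A C"
    unfolding upward_curve_def by (simp add: path_join)
  show "path_image (linepath A B +++ linepath B C) = closed_segment A B \<union> closed_segment B C"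
    by (simp add: path_image_join)
qed

lemma polyline_into_origin_from_below:
  fixes X Y \<epsilon> :: real
  assumes \<epsilon>: "0 < \<epsilon>" "\<epsilon> < X" and Y: "Y + 1/2 < 0"
  defines "B \<equiv> (\<epsilon>, Y + 1/2)"
  defines "\<gamma> \<equiv> linepath (X, Y) B +++ linepath B (0, 0)"
  shows "upward_curve \<gamma> (X, Y) (0, 0)"
    and "p \<in> path_image \<gamma> \<Longrightarrow> Y \<le> snd p \<and> 0 \<le> fst p \<and> fst p \<le> X \<and> (fst p = X \<longrightarrow> p = (X, Y)) \<and>
      (snd p \<le> Y + 1/2 \<and> \<epsilon> \<le> fst p \<or> (\<exists>s\<in>{0..1}. p = s *\<^sub>R B))"
proof -
  show "upward_curve \<gamma> (X, Y) (0, 0)"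
    using upward_curve_polyline(1)[of "(X, Y)" B "(0, 0)"] Y unfolding \<gamma>_def B_def by simp
  assume "p \<in> path_image \<gamma>"
  then consider "p \<in> closed_segment (X, Y) B" | "p \<in> closed_segment B (0, 0)"
    using upward_curve_polyline(2)[of "(X, Y)" B "(0, 0)"] Y unfolding \<gamma>_def B_def by auto
  then show "Y \<le> snd p \<and> 0 \<le> fst p \<and> fst p \<le> X \<and> (fst p = X \<longrightarrow> p = (X, Y)) \<and>
      (snd p \<le> Y + 1/2 \<and> \<epsilon> \<le> fst p \<or> (\<exists>s\<in>{0..1}. p = s *\<^sub>R B))"
  proof cases
    case 1
    then obtain u where u: "0 \<le> u" "u \<le> 1" "fst p = X - u * (X - \<epsilon>)" "snd p = Y + u / 2"
      by (rule closed_segment_coords) (auto simp: B_def algebra_simps)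
    have "0 \<le> u * (X - \<epsilon>)" "u * (X - \<epsilon>) \<le> X - \<epsilon>"
      using u \<epsilon> by (simp_all add: mult_left_le_one_le)
    then have "\<epsilon> \<le> fst p" "fst p \<le> X" using u(3) by simp_all
    moreover have "p = (X, Y)" if "fst p = X"
      using that u \<epsilon> by (auto simp: prod_eq_iff)
    ultimately show ?thesis using u \<epsilon> by auto
  next
    case 2
    then obtain u where u: "0 \<le> u" "u \<le> 1" "p = (1 - u) *\<^sub>R B"
      unfolding closed_segment_def by (auto simp: zero_prod_def[symmetric])
    have "u * (Y + 1/2) \<le> 0" using u Y by (simp add: mult_nonneg_nonpos)
    then have "Y \<le> snd p" "0 \<le> fst p" "fst p \<le> \<epsilon>"
      using u Y \<epsilon> unfolding B_def by (auto simp: algebra_simps mult_left_le_one_le)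
    moreover have "1 - u \<in> {0..1}" using u by simp
    ultimately show ?thesis using u \<epsilon> by fastforce
  qed
qed

lemma polyline_out_of_origin_upwards:
  fixes X Y :: real
  assumes X: "0 < X" and Y: "1/2 < Y"
  defines "B \<equiv> (X, 1/2)"
  defines "\<gamma> \<equiv> linepath (0, 0) B +++ linepath B (X, Y)"
  shows "upward_curve \<gamma> (0, 0) (X, Y)"
    and "p \<in> path_image \<gamma> \<Longrightarrow> fst p = X \<and> 1/2 \<le> snd p \<or> (\<exists>s\<in>{0..1}. p = s *\<^sub>R B)"
proof -
  show "upward_curve \<gamma> (0, 0) (X, Y)"
    using upward_curve_polyline(1)[of "(0, 0)" B "(X, Y)"] Y unfolding \<gamma>_def B_def by simp
  assume "p \<in> path_image \<gamma>"
  then consider "p \<in> closed_segment (0, 0) B" | "p \<in> closed_segment B (X, Y)"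
    using upward_curve_polyline(2)[of "(0, 0)" B "(X, Y)"] Y unfolding \<gamma>_def B_def by auto
  then show "fst p = X \<and> 1/2 \<le> snd p \<or> (\<exists>s\<in>{0..1}. p = s *\<^sub>R B)"
  proof cases
    case 1
    then obtain u where "0 \<le> u" "u \<le> 1" "p = u *\<^sub>R B"
      unfolding closed_segment_def by (auto simp: zero_prod_def[symmetric])
    then show ?thesis by auto
  next
    case 2
    then obtain u where u: "0 \<le> u" "u \<le> 1" "p = (1 - u) *\<^sub>R B + u *\<^sub>R (X, Y)"
      unfolding closed_segment_def by auto
    then have "fst p = X" "snd p = 1/2 + u * (Y - 1/2)" unfolding B_def by (auto simp: field_simps)
    moreover have "0 \<le> u * (Y - 1/2)" using u Y by simp
    ultimately show ?thesis by simp
  qed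
qed

definition root_region :: "real \<Rightarrow> real \<Rightarrow> real \<Rightarrow> (real \<times> real) set" where
  "root_region W L \<mu> = {p. 0 \<le> fst p \<and> fst p \<le> W \<and> (fst p = 0 \<longrightarrow> p = (0, 0)) \<and> - L \<le> snd p \<and>
     (snd p < 0 \<longrightarrow> \<mu> * - snd p \<le> fst p)}"

lemma root_region_mono:
  assumes "W \<le> W'" "L \<le> L'" "0 \<le> \<mu>'" "\<mu>' \<le> \<mu>"
  shows "root_region W L \<mu> \<subseteq> root_region W' L' \<mu>'"
proof
  fix p assume p: "p \<in> root_region W L \<mu>"
  have "\<mu>' * - snd p \<le> fst p" if "snd p < 0"
  proof -
    have "\<mu>' * - snd p \<le> \<mu> * - snd p" using assms(4) that by (intro mult_right_mono) auto
    also have "\<dots> \<le> fst p" using p that unfolding root_region_def by auto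
    finally show ?thesis .
  qed
  then show "p \<in> root_region W' L' \<mu>'" using p assms(1,2) unfolding root_region_def by auto
qed

lemma translate_root_region:
  assumes "D \<subseteq> root_region W L \<mu>" "q \<in> (\<lambda>p. p + (X, Y)) ` D"
  shows "X \<le> fst q" "fst q \<le> X + W" "fst q = X \<Longrightarrow> q = (X, Y)" "Y - L \<le> snd q"
proof -
  obtain p where p: "p \<in> root_region W L \<mu>" "q = p + (X, Y)" using assms by blast
  then show "X \<le> fst q" "fst q \<le> X + W" "fst q = X \<Longrightarrow> q = (X, Y)" "Y - L \<le> snd q"
    unfolding root_region_def by auto
qed

lemma below_connector_avoids:
  fixes L1 :: nat
  assumes reg1: "D1 \<subseteq> root_region W1 L1 \<mu>1" and reg2: "D2 \<subseteq> root_region W2 L2 \<mu>2"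
    and X: "W1 < X" and \<epsilon>: "0 < \<epsilon>" "\<epsilon> < X" "\<epsilon> < \<mu>1 * (L1 + 1/2)"
  defines "Y \<equiv> - real L1 - 1"
  defines "B \<equiv> (\<epsilon>, Y + 1/2)"
  defines "\<gamma> \<equiv> linepath (X, Y) B +++ linepath B (0, 0)"
  shows "path_image \<gamma> \<inter> D1 \<subseteq> {(0, 0)}" and "path_image \<gamma> \<inter> (\<lambda>p. p + (X, Y)) ` D2 \<subseteq> {(X, Y)}"
    and "D1 \<inter> (\<lambda>p. p + (X, Y)) ` D2 = {}"
proof -
  have "Y + 1/2 < 0" unfolding Y_def by simp
  note \<gamma>_pts = polyline_into_origin_from_below[OF \<epsilon>(1,2) this, folded B_def, folded \<gamma>_def]
  \<comment> \<open>the second segment of \<gamma> runs just outside the cone below the root of D1\<close>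
  have ray_outside: "s *\<^sub>R B \<notin> root_region W1 L1 \<mu>1" if "0 < s" for s
  proof
    assume "s *\<^sub>R B \<in> root_region W1 L1 \<mu>1"
    moreover have "snd (s *\<^sub>R B) < 0" using that unfolding B_def Y_def by (simp add: mult_pos_neg)
    ultimately have "\<mu>1 * - snd (s *\<^sub>R B) \<le> fst (s *\<^sub>R B)" unfolding root_region_def by blast
    then have "s * (\<mu>1 * (L1 + 1/2)) \<le> s * \<epsilon>" unfolding B_def Y_def by (simp add: algebra_simps)
    with \<epsilon>(3) that show False by simp
  qed
  show "path_image \<gamma> \<inter> D1 \<subseteq> {(0, 0)}"
  proof
    fix p assume p: "p \<in> path_image \<gamma> \<inter> D1"
    then have p1: "p \<in> root_region W1 L1 \<mu>1" using reg1 by blast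
    then have "\<not> snd p \<le> Y + 1/2" unfolding root_region_def Y_def by auto
    moreover have "p \<in> path_image \<gamma>" using p by blast
    then have "snd p \<le> Y + 1/2 \<and> \<epsilon> \<le> fst p \<or> (\<exists>s\<in>{0..1}. p = s *\<^sub>R B)"
      using \<gamma>_pts(2) by blast
    ultimately obtain s where "s \<in> {0..1}" "p = s *\<^sub>R B" by blast
    moreover from this have "\<not> 0 < s" using ray_outside p1 by blast
    ultimately show "p \<in> {(0, 0)}" by (simp add: zero_prod_def)
  qed
  show "path_image \<gamma> \<inter> (\<lambda>p. p + (X, Y)) ` D2 \<subseteq> {(X, Y)}"
  proof
    fix p assume "p \<in> path_image \<gamma> \<inter> (\<lambda>p. p + (X, Y)) ` D2"
    then have p: "p \<in> path_image \<gamma>" "p \<in> (\<lambda>p. p + (X, Y)) ` D2" by auto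
    then have "fst p = X" using \<gamma>_pts(2)[OF p(1)] translate_root_region(1)[OF reg2 p(2)] by simp
    then show "p \<in> {(X, Y)}" using translate_root_region(3)[OF reg2 p(2)] by simp
  qed
  have "fst q < X" if "q \<in> D1" for q using that reg1 X unfolding root_region_def by auto
  moreover have "X \<le> fst q" if "q \<in> (\<lambda>p. p + (X, Y)) ` D2" for q
    using translate_root_region(1)[OF reg2 that] .
  ultimately show "D1 \<inter> (\<lambda>p. p + (X, Y)) ` D2 = {}" by (meson disjoint_iff not_le)
qed

lemma below_connector_region:
  fixes L1 L2 :: nat
  assumes reg1: "D1 \<subseteq> root_region W1 L1 \<mu>1" and reg2: "D2 \<subseteq> root_region W2 L2 \<mu>2"
    and X: "W1 \<le> X" "1 \<le> X" and "0 \<le> W2" and \<epsilon>: "0 < \<epsilon>" "\<epsilon> < X"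
    and \<mu>: "0 < \<mu>" "\<mu> \<le> \<mu>1" "\<mu> * (L1 + 1) \<le> \<epsilon>" "\<mu> * (L1 + L2 + 2) \<le> 1"
  defines "Y \<equiv> - real L1 - 1"
  defines "B \<equiv> (\<epsilon>, Y + 1/2)"
  defines "\<gamma> \<equiv> linepath (X, Y) B +++ linepath B (0, 0)"
  shows "D1 \<union> (\<lambda>p. p + (X, Y)) ` D2 \<union> path_image \<gamma> \<subseteq> root_region (X + W2) (L1 + 1 + L2) \<mu>"
proof -
  let ?R = "root_region (X + W2) (L1 + 1 + L2) \<mu>"
  have "Y + 1/2 < 0" unfolding Y_def by simp
  note \<gamma>_pts = polyline_into_origin_from_below[OF \<epsilon> this, folded B_def, folded \<gamma>_def]
  have "D1 \<subseteq> ?R" using reg1 root_region_mono[of W1 "X + W2" L1 "L1 + 1 + L2" \<mu> \<mu>1] X \<open>0 \<le> W2\<close> \<mu> by auto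
  moreover have "(\<lambda>p. p + (X, Y)) ` D2 \<subseteq> ?R"
  proof
    fix q assume q: "q \<in> (\<lambda>p. p + (X, Y)) ` D2"
    then have q_box: "X \<le> fst q" "fst q \<le> X + W2" "- real (L1 + 1 + L2) \<le> snd q"
      using translate_root_region[OF reg2 q] unfolding Y_def by auto
    then have "\<mu> * - snd q \<le> \<mu> * (L1 + L2 + 2)" using \<mu>(1) by (intro mult_left_mono) auto
    then show "q \<in> ?R" using q_box \<mu>(4) X(2) unfolding root_region_def by auto
  qed
  moreover have "path_image \<gamma> \<subseteq> ?R"
  proof
    fix p assume p: "p \<in> path_image \<gamma>"
    then have p_box: "- real (L1 + 1 + L2) \<le> snd p" "0 \<le> fst p" "fst p \<le> X + W2"
      using \<gamma>_pts(2)[OF p] \<open>0 \<le> W2\<close> unfolding Y_def by auto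
    from \<gamma>_pts(2)[OF p] consider "snd p \<le> Y + 1/2" "\<epsilon> \<le> fst p" | s where "s \<in> {0..1}" "p = s *\<^sub>R B"
      by blast
    then show "p \<in> ?R"
    proof cases
      case 1
      have "\<mu> * - snd p \<le> \<mu> * (L1 + 1)" using \<gamma>_pts(2)[OF p] \<mu>(1) unfolding Y_def by (intro mult_left_mono) auto
      then show ?thesis using 1 p_box \<mu>(3) \<epsilon>(1) unfolding root_region_def by auto
    next
      case 2
      have p_coords: "fst p = s * \<epsilon>" "snd p = - (s * (L1 + 1/2))"
        using 2(2) unfolding B_def Y_def by (simp_all add: algebra_simps)
      have "\<mu> * (L1 + 1/2) \<le> \<mu> * (L1 + 1)" using \<mu>(1) by simp
      then have "\<mu> * (L1 + 1/2) \<le> \<epsilon>" using \<mu>(3) by linarith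
      then have "s * (\<mu> * (L1 + 1/2)) \<le> s * \<epsilon>" using 2 by (intro mult_left_mono) auto
      moreover have "\<mu> * - snd p = s * (\<mu> * (L1 + 1/2))" unfolding p_coords(2) by (simp add: algebra_simps)
      ultimately have "\<mu> * - snd p \<le> fst p" using p_coords(1) by simp
      moreover have "fst p = 0 \<longrightarrow> p = (0, 0)" using p_coords 2(2) \<epsilon>(1) by (auto simp: zero_prod_def)
      ultimately show ?thesis using p_box unfolding root_region_def by auto
    qed
  qed
  ultimately show ?thesis by blast
qed

lemma above_connector_avoids:
  fixes L2 :: nat
  assumes reg1: "D1 \<subseteq> root_region W1 L1 \<mu>1" and line1: "\<forall>p\<in>D1. \<nu>1 * fst p \<le> snd p"
    and reg2: "D2 \<subseteq> root_region W2 L2 \<mu>2" and X: "0 < X" "W1 < X" "1 < \<nu>1 * X"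
  defines "Y \<equiv> real L2 + 1"
  defines "B \<equiv> (X, 1/2 :: real)"
  defines "\<gamma> \<equiv> linepath (0, 0) B +++ linepath B (X, Y)"
  shows "path_image \<gamma> \<inter> D1 \<subseteq> {(0, 0)}" and "path_image \<gamma> \<inter> (\<lambda>p. p + (X, Y)) ` D2 \<subseteq> {(X, Y)}"
    and "D1 \<inter> (\<lambda>p. p + (X, Y)) ` D2 = {}"
proof -
  have "1/2 < Y" unfolding Y_def by simp
  note \<gamma>_pts = polyline_out_of_origin_upwards[OF X(1) this, folded B_def, folded \<gamma>_def]
  have D1_right: "fst q < X" if "q \<in> D1" for q using that reg1 X unfolding root_region_def by auto
  \<comment> \<open>the first segment of \<gamma> leaves the root below the line bounding D1\<close>
  show "path_image \<gamma> \<inter> D1 \<subseteq> {(0, 0)}"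
  proof
    fix p assume "p \<in> path_image \<gamma> \<inter> D1"
    then have p: "p \<in> path_image \<gamma>" "p \<in> D1" by auto
    then have "fst p \<noteq> X" using D1_right[OF p(2)] by simp
    then obtain s where s: "s \<in> {0..1}" "p = s *\<^sub>R B" using \<gamma>_pts(2)[OF p(1)] by blast
    have "\<nu>1 * fst p \<le> snd p" using line1 p(2) by blast
    then have "s * (\<nu>1 * X) \<le> s * (1/2)" using s(2) unfolding B_def by (simp add: algebra_simps)
    then have "s = 0"
    proof (rule contrapos_pp)
      assume "s \<noteq> 0"
      then have "0 < s" using s(1) by simp
      with X(3) show "\<not> s * (\<nu>1 * X) \<le> s * (1/2)" by simp
    qed
    then show "p \<in> {(0, 0)}" using s(2) by (simp add: zero_prod_def)
  qed
  show "path_image \<gamma> \<inter> (\<lambda>p. p + (X, Y)) ` D2 \<subseteq> {(X, Y)}"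
  proof
    fix p assume "p \<in> path_image \<gamma> \<inter> (\<lambda>p. p + (X, Y)) ` D2"
    then have p: "p \<in> path_image \<gamma>" "p \<in> (\<lambda>p. p + (X, Y)) ` D2" by auto
    have "1 \<le> snd p" using translate_root_region(4)[OF reg2 p(2)] unfolding Y_def by simp
    moreover have "snd (s *\<^sub>R B) \<le> 1/2" if "s \<in> {0..1}" for s using that unfolding B_def by simp
    ultimately have "fst p = X" using \<gamma>_pts(2)[OF p(1)] by force
    then show "p \<in> {(X, Y)}" using translate_root_region(3)[OF reg2 p(2)] by simp
  qed
  have "X \<le> fst q" if "q \<in> (\<lambda>p. p + (X, Y)) ` D2" for q
    using translate_root_region(1)[OF reg2 that] .
  with D1_right show "D1 \<inter> (\<lambda>p. p + (X, Y)) ` D2 = {}" by (meson disjoint_iff not_le)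
qed

lemma above_connector_region:
  fixes L2 :: nat
  assumes reg1: "D1 \<subseteq> root_region W1 L1 \<mu>1" and line1: "\<forall>p\<in>D1. \<nu>1 * fst p \<le> snd p"
    and reg2: "D2 \<subseteq> root_region W2 L2 \<mu>2" and X: "0 < X" "W1 \<le> X" and "0 \<le> W2"
    and \<nu>: "0 < \<nu>" "\<nu> \<le> \<nu>1" "\<nu> * (X + W2) \<le> 1/2"
  defines "Y \<equiv> real L2 + 1"
  defines "B \<equiv> (X, 1/2 :: real)"
  defines "\<gamma> \<equiv> linepath (0, 0) B +++ linepath B (X, Y)"
  shows "D1 \<union> (\<lambda>p. p + (X, Y)) ` D2 \<union> path_image \<gamma> \<subseteq> root_region (X + W2) 0 1 \<inter> {p. \<nu> * fst p \<le> snd p}"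
proof -
  let ?S = "{p. 0 \<le> fst p \<and> fst p \<le> X + W2 \<and> (fst p = 0 \<longrightarrow> p = (0, 0)) \<and> \<nu> * fst p \<le> snd p}"
  have "1/2 < Y" unfolding Y_def by simp
  note \<gamma>_pts = polyline_out_of_origin_upwards[OF X(1) this, folded B_def, folded \<gamma>_def]
  have "\<nu> * X \<le> \<nu> * (X + W2)" using \<nu>(1) \<open>0 \<le> W2\<close> by simp
  have "D1 \<subseteq> ?S"
  proof
    fix p assume p: "p \<in> D1"
    then have "0 \<le> fst p" "fst p \<le> X + W2" "fst p = 0 \<longrightarrow> p = (0, 0)"
      using reg1 X(2) \<open>0 \<le> W2\<close> unfolding root_region_def by auto
    moreover have "\<nu> * fst p \<le> \<nu>1 * fst p" using \<nu>(2) \<open>0 \<le> fst p\<close> by (rule mult_right_mono)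
    then have "\<nu> * fst p \<le> snd p" using line1 p by fastforce
    ultimately show "p \<in> ?S" by auto
  qed
  moreover have "(\<lambda>p. p + (X, Y)) ` D2 \<subseteq> ?S"
  proof
    fix q assume q: "q \<in> (\<lambda>p. p + (X, Y)) ` D2"
    then have q_box: "X \<le> fst q" "fst q \<le> X + W2" "1 \<le> snd q"
      using translate_root_region[OF reg2 q] unfolding Y_def by auto
    then have "\<nu> * fst q \<le> \<nu> * (X + W2)" using \<nu>(1) by (intro mult_left_mono) auto
    then show "q \<in> ?S" using q_box \<nu>(3) X(1) by auto
  qed
  moreover have "path_image \<gamma> \<subseteq> ?S"
  proof
    fix p assume p: "p \<in> path_image \<gamma>"
    then consider "fst p = X" "1/2 \<le> snd p" | s where "s \<in> {0..1}" "p = s *\<^sub>R B"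
      using \<gamma>_pts(2) by blast
    then show "p \<in> ?S"
    proof cases
      case 1
      then show ?thesis using \<open>\<nu> * X \<le> \<nu> * (X + W2)\<close> \<nu>(3) X(1) \<open>0 \<le> W2\<close> by auto
    next
      case 2
      have p_coords: "fst p = s * X" "snd p = s / 2" using 2(2) unfolding B_def by simp_all
      have "s * (\<nu> * X) \<le> s * (1/2)"
        using 2(1) \<nu>(3) \<open>\<nu> * X \<le> \<nu> * (X + W2)\<close> by (intro mult_left_mono) auto
      then have "\<nu> * fst p \<le> snd p" unfolding p_coords by (simp add: algebra_simps)
      moreover have "0 \<le> fst p" "fst p \<le> X" using 2(1) X(1) unfolding p_coords
        by (auto simp: mult_left_le_one_le)
      moreover have "p = (0, 0)" if "fst p = 0" using that 2(2) X(1) unfolding p_coords by (simp add: zero_prod_def)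
      ultimately show ?thesis using \<open>0 \<le> W2\<close> by auto
    qed
  qed
  moreover have "?S \<subseteq> root_region (X + W2) 0 1"
  proof
    fix p assume p: "p \<in> ?S"
    then have "0 \<le> \<nu> * fst p" using \<nu>(1) by simp
    then have "0 \<le> snd p" using p by simp
    then show "p \<in> root_region (X + W2) 0 1" using p unfolding root_region_def by simp
  qed
  ultimately show ?thesis by blast
qed

text \<open>Since the drawing avoids the vertical line through the root and stays inside a cone below
  the root, a new edge can be routed into the root from below or out of it to the right.\<close>

definition rooted_drawing :: "'a set \<Rightarrow> ('a \<times> 'a) set \<Rightarrow> 'a \<Rightarrow> nat \<Rightarrow> ('a \<Rightarrow> real) \<Rightarrow> ('a \<Rightarrow> int) \<Rightarrow>
    ('a \<times> 'a \<Rightarrow> real \<Rightarrow> real \<times> real) \<Rightarrow> bool" where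
  "rooted_drawing V E r L px py g \<longleftrightarrow> proper_drawing V E px py g \<and> px r = 0 \<and> py r = 0 \<and>
     (\<exists>W \<mu>. 0 < \<mu> \<and> drawing_points V E px py g \<subseteq> root_region W (real L) \<mu>)"

lemma rooted_drawingE:
  assumes "rooted_drawing V E r L px py g" "r \<in> V"
  obtains W \<mu> where "proper_drawing V E px py g" "px r = 0" "py r = 0" "0 < \<mu>" "0 \<le> W"
    "drawing_points V E px py g \<subseteq> root_region W L \<mu>"
proof -
  obtain W \<mu> where *: "proper_drawing V E px py g" "px r = 0" "py r = 0" "0 < \<mu>"
    "drawing_points V E px py g \<subseteq> root_region W L \<mu>"
    using assms(1) unfolding rooted_drawing_def by blast
  then have "(0, 0) \<in> drawing_points V E px py g"
    using assms(2) unfolding drawing_points_def vertex_point_def by force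
  then have "0 \<le> W" using *(5) unfolding root_region_def by auto
  with * that show ?thesis by blast
qed

lemma rooted_drawing_attach_below:
  fixes L1 L2 :: nat
  assumes R1: "rooted_drawing V1 E1 r L1 px1 py1 g1" and R2: "rooted_drawing V2 E2 w L2 px2 py2 g2"
    and V: "r \<in> V1" "w \<in> V2" "V1 \<inter> V2 = {}" and E: "E1 \<subseteq> V1 \<times> V1" "E2 \<subseteq> V2 \<times> V2"
  obtains px py g where "rooted_drawing (V1 \<union> V2) (insert (w, r) (E1 \<union> E2)) r (L1 + 1 + L2) px py g"
    "\<forall>v\<in>V1. py v = py1 v" "\<forall>v\<in>V2. py v = py2 v - int (L1 + 1)"
proof -
  let ?D1 = "drawing_points V1 E1 px1 py1 g1" and ?D2 = "drawing_points V2 E2 px2 py2 g2"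
  obtain W1 \<mu>1 where D1: "proper_drawing V1 E1 px1 py1 g1" and r: "px1 r = 0" "py1 r = 0"
    and "0 < \<mu>1" "0 \<le> W1" and reg1: "?D1 \<subseteq> root_region W1 L1 \<mu>1"
    by (rule rooted_drawingE[OF R1 V(1)])
  obtain W2 \<mu>2 where D2: "proper_drawing V2 E2 px2 py2 g2" and w: "px2 w = 0" "py2 w = 0"
    and "0 < \<mu>2" "0 \<le> W2" and reg2: "?D2 \<subseteq> root_region W2 L2 \<mu>2"
    by (rule rooted_drawingE[OF R2 V(2)])
  \<comment> \<open>the part of w goes to the right of the part of r and below it; a small \<open>\<epsilon>\<close> keeps the new
    edge outside the cone below r\<close>
  define X where "X = W1 + 1"
  define Y :: int where "Y = - int (L1 + 1)"
  define \<epsilon> where "\<epsilon> = min (1/2) (\<mu>1 * (L1 + 1/2) / 2)"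
  define \<mu> where "\<mu> = min \<mu>1 (min (\<epsilon> / (L1 + 1)) (1 / (L1 + L2 + 2)))"
  define \<gamma> where "\<gamma> = linepath (X, real_of_int Y) (\<epsilon>, real_of_int Y + 1/2) +++
    linepath (\<epsilon>, real_of_int Y + 1/2) (0, 0)"
  have Y: "real_of_int Y = - real L1 - 1" unfolding Y_def by simp
  have X: "W1 < X" "W1 \<le> X" "1 \<le> X" using \<open>0 \<le> W1\<close> unfolding X_def by simp_all
  have \<epsilon>: "0 < \<epsilon>" "\<epsilon> < X" "\<epsilon> < \<mu>1 * (L1 + 1/2)"
    using \<open>0 < \<mu>1\<close> \<open>0 \<le> W1\<close> unfolding \<epsilon>_def X_def by (auto simp: min_def)
  have "0 < \<mu>" "\<mu> \<le> \<mu>1" "\<mu> \<le> \<epsilon> / (L1 + 1)" "\<mu> \<le> 1 / (L1 + L2 + 2)"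
    using \<open>0 < \<mu>1\<close> \<epsilon> unfolding \<mu>_def by auto
  then have \<mu>: "0 < \<mu>" "\<mu> \<le> \<mu>1" "\<mu> * (L1 + 1) \<le> \<epsilon>" "\<mu> * (L1 + L2 + 2) \<le> 1"
    by (simp_all add: pos_le_divide_eq)
  note avoid = below_connector_avoids[OF reg1 reg2 X(1) \<epsilon>, folded Y, folded \<gamma>_def]
  note region = below_connector_region[OF reg1 reg2 X(2,3) \<open>0 \<le> W2\<close> \<epsilon>(1,2) \<mu>, folded Y, folded \<gamma>_def]
  define px where "px = (\<lambda>v. if v \<in> V1 then px1 v else px2 v + X)"
  define py where "py = (\<lambda>v. if v \<in> V1 then py1 v else py2 v + Y)"
  define g where "g = (\<lambda>e. if e \<in> E1 then g1 e else (\<lambda>t. g2 e t + (X, real_of_int Y)))((w, r) := \<gamma>)"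
  have "real_of_int Y + 1/2 < 0" using Y by simp
  then have "upward_curve \<gamma> (X, real_of_int Y) (0, 0)"
    using polyline_into_origin_from_below(1)[OF \<epsilon>(1,2)] unfolding \<gamma>_def by blast
  moreover have "vertex_point px py w = (X, real_of_int Y)" "vertex_point px py r = (0, 0)"
    using V r w unfolding px_def py_def vertex_point_def by auto
  ultimately have curve: "upward_curve \<gamma> (vertex_point px py (fst (w, r))) (vertex_point px py (snd (w, r)))"
    by simp
  have "vertex_point px1 py1 r = (0, 0)" "vertex_point px2 py2 w + (X, real_of_int Y) = (X, real_of_int Y)"
    using r w unfolding vertex_point_def by simp_all
  then have meet1: "path_image \<gamma> \<inter> ?D1 \<subseteq> {vertex_point px1 py1 r}"
    and meet2: "path_image \<gamma> \<inter> (\<lambda>p. p + (X, real_of_int Y)) ` ?D2 \<subseteq> {vertex_point px2 py2 w + (X, real_of_int Y)}"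
    using avoid(1,2) by simp_all
  note joined = proper_drawing_join[where e = "(w, r)" and \<gamma> = \<gamma> and X = X and Y = Y,
      OF D1 D2 E V(3) disjI2[OF refl] V(1,2), folded px_def py_def g_def, OF curve avoid(3) meet1 meet2]
  have "drawing_points (V1 \<union> V2) (insert (w, r) (E1 \<union> E2)) px py g \<subseteq> root_region (X + W2) (L1 + 1 + L2) \<mu>"
    using region unfolding joined(2) by simp
  then have "rooted_drawing (V1 \<union> V2) (insert (w, r) (E1 \<union> E2)) r (L1 + 1 + L2) px py g"
    unfolding rooted_drawing_def using joined(1) \<mu>(1) V r unfolding px_def py_def by auto
  moreover have "\<forall>v\<in>V1. py v = py1 v" "\<forall>v\<in>V2. py v = py2 v - int (L1 + 1)"
    using V unfolding py_def Y_def by auto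
  ultimately show ?thesis using that by blast
qed

lemma rooted_drawing_attach_above:
  fixes L1 L2 :: nat
  assumes R1: "rooted_drawing V1 E1 r L1 px1 py1 g1" and "0 < \<nu>1"
    and line1: "\<forall>p\<in>drawing_points V1 E1 px1 py1 g1. \<nu>1 * fst p \<le> snd p"
    and R2: "rooted_drawing V2 E2 u L2 px2 py2 g2"
    and V: "r \<in> V1" "u \<in> V2" "V1 \<inter> V2 = {}" and E: "E1 \<subseteq> V1 \<times> V1" "E2 \<subseteq> V2 \<times> V2"
  obtains px py g \<nu> where "rooted_drawing (V1 \<union> V2) (insert (r, u) (E1 \<union> E2)) r 0 px py g"
    "0 < \<nu>" "\<forall>p\<in>drawing_points (V1 \<union> V2) (insert (r, u) (E1 \<union> E2)) px py g. \<nu> * fst p \<le> snd p"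
    "\<forall>v\<in>V1. py v = py1 v" "\<forall>v\<in>V2. py v = py2 v + int (L2 + 1)"
proof -
  let ?D1 = "drawing_points V1 E1 px1 py1 g1" and ?D2 = "drawing_points V2 E2 px2 py2 g2"
  obtain W1 \<mu>1 where D1: "proper_drawing V1 E1 px1 py1 g1" and r: "px1 r = 0" "py1 r = 0"
    and "0 < \<mu>1" "0 \<le> W1" and reg1: "?D1 \<subseteq> root_region W1 L1 \<mu>1"
    by (rule rooted_drawingE[OF R1 V(1)])
  obtain W2 \<mu>2 where D2: "proper_drawing V2 E2 px2 py2 g2" and u: "px2 u = 0" "py2 u = 0"
    and "0 < \<mu>2" "0 \<le> W2" and reg2: "?D2 \<subseteq> root_region W2 L2 \<mu>2"
    by (rule rooted_drawingE[OF R2 V(2)])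
  \<comment> \<open>X is so large that the segment from r to (X, 1/2) runs below the line bounding the part of r\<close>
  define X where "X = W1 + 1 + 1 / \<nu>1"
  define Y :: int where "Y = int (L2 + 1)"
  define \<nu> where "\<nu> = min \<nu>1 (1 / (2 * (X + W2)))"
  define \<gamma> where "\<gamma> = linepath (0, 0) (X, 1/2) +++ linepath (X, 1/2) (X, real_of_int Y)"
  have Y: "real_of_int Y = real L2 + 1" unfolding Y_def by simp
  have X: "0 < X" "W1 < X" "W1 \<le> X" "1 < \<nu>1 * X"
    using \<open>0 < \<nu>1\<close> \<open>0 \<le> W1\<close> unfolding X_def by (auto simp: algebra_simps add_pos_nonneg)
  have "0 < \<nu>" "\<nu> \<le> \<nu>1" "\<nu> \<le> 1 / (2 * (X + W2))"
    using \<open>0 < \<nu>1\<close> X(1) \<open>0 \<le> W2\<close> unfolding \<nu>_def by auto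
  then have \<nu>: "0 < \<nu>" "\<nu> \<le> \<nu>1" "\<nu> * (X + W2) \<le> 1/2"
    using X(1) \<open>0 \<le> W2\<close> by (simp_all add: pos_le_divide_eq algebra_simps)
  note avoid = above_connector_avoids[OF reg1 line1 reg2 X(1,2,4), folded Y, folded \<gamma>_def]
  note region = above_connector_region[OF reg1 line1 reg2 X(1,3) \<open>0 \<le> W2\<close> \<nu>, folded Y, folded \<gamma>_def]
  define px where "px = (\<lambda>v. if v \<in> V1 then px1 v else px2 v + X)"
  define py where "py = (\<lambda>v. if v \<in> V1 then py1 v else py2 v + Y)"
  define g where "g = (\<lambda>e. if e \<in> E1 then g1 e else (\<lambda>t. g2 e t + (X, real_of_int Y)))((r, u) := \<gamma>)"
  have "1/2 < real_of_int Y" using Y by simp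
  then have "upward_curve \<gamma> (0, 0) (X, real_of_int Y)"
    using polyline_out_of_origin_upwards(1)[OF X(1)] unfolding \<gamma>_def by blast
  moreover have "vertex_point px py r = (0, 0)" "vertex_point px py u = (X, real_of_int Y)"
    using V r u unfolding px_def py_def vertex_point_def by auto
  ultimately have curve: "upward_curve \<gamma> (vertex_point px py (fst (r, u))) (vertex_point px py (snd (r, u)))"
    by simp
  have "vertex_point px1 py1 r = (0, 0)" "vertex_point px2 py2 u + (X, real_of_int Y) = (X, real_of_int Y)"
    using r u unfolding vertex_point_def by simp_all
  then have meet1: "path_image \<gamma> \<inter> ?D1 \<subseteq> {vertex_point px1 py1 r}"
    and meet2: "path_image \<gamma> \<inter> (\<lambda>p. p + (X, real_of_int Y)) ` ?D2 \<subseteq> {vertex_point px2 py2 u + (X, real_of_int Y)}"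
    using avoid(1,2) by simp_all
  note joined = proper_drawing_join[where e = "(r, u)" and \<gamma> = \<gamma> and X = X and Y = Y,
      OF D1 D2 E V(3) disjI1[OF refl] V(1,2), folded px_def py_def g_def, OF curve avoid(3) meet1 meet2]
  have pts: "drawing_points (V1 \<union> V2) (insert (r, u) (E1 \<union> E2)) px py g \<subseteq>
      root_region (X + W2) 0 1 \<inter> {p. \<nu> * fst p \<le> snd p}"
    using region unfolding joined(2) by simp
  then have "rooted_drawing (V1 \<union> V2) (insert (r, u) (E1 \<union> E2)) r 0 px py g"
    unfolding rooted_drawing_def using joined(1) V r unfolding px_def py_def by auto
  moreover have "\<forall>v\<in>V1. py v = py1 v" "\<forall>v\<in>V2. py v = py2 v + int (L2 + 1)"
    using V unfolding py_def Y_def by auto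
  ultimately show ?thesis using that \<nu>(1) pts by blast
qed

section \<open>The recursive construction\<close>

lemma indeg_attach_below:
  assumes "finite E1" "E1 \<subseteq> V1 \<times> V1" "E2 \<subseteq> V2 \<times> V2" "r \<in> V1" "w \<in> V2" "V1 \<inter> V2 = {}"
  shows "indeg (insert (w, r) (E1 \<union> E2)) r = Suc (indeg E1 r)"
proof -
  have "{e \<in> insert (w, r) (E1 \<union> E2). snd e = r} = insert (w, r) {e \<in> E1. snd e = r}"
    "(w, r) \<notin> {e \<in> E1. snd e = r}"
    using assms(2-6) by auto
  then show ?thesis unfolding indeg_def using assms(1) by simp
qed

definition bounded_rooted_drawing :: "nat \<Rightarrow> nat \<Rightarrow> 'a set \<Rightarrow> ('a \<times> 'a) set \<Rightarrow> 'a \<Rightarrow> nat \<Rightarrow> bool" where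
  "bounded_rooted_drawing d l V E r h \<longleftrightarrow> (\<exists>L px py g. rooted_drawing V E r L px py g \<and>
     L \<le> indeg E r * (1 + depth_bound d (h - 1)) \<and>
     (indeg E r = 0 \<longrightarrow> (\<exists>\<nu>>0. \<forall>p\<in>drawing_points V E px py g. \<nu> * fst p \<le> snd p)) \<and>
     (\<forall>(u, v)\<in>E. py v - py u \<le> int (depth_bound d l + 1)))"

lemma bounded_rooted_drawing_singleton: "bounded_rooted_drawing d l {r} {} r h"
proof -
  let ?px = "\<lambda>_. 0" and ?py = "\<lambda>_. 0" and ?g = "\<lambda>_ _. (0, 0)"
  have pts: "drawing_points {r} {} ?px ?py ?g = {(0, 0)}"
    unfolding drawing_points_def vertex_point_def by simp
  moreover have "proper_drawing {r} {} ?px ?py ?g"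
    unfolding proper_drawing_def upward_layered_drawing_iff by simp
  ultimately have "rooted_drawing {r} {} r 0 ?px ?py ?g"
    unfolding rooted_drawing_def root_region_def by (auto intro: exI[of _ 1])
  then show ?thesis unfolding bounded_rooted_drawing_def
    by (intro exI[of _ 0] exI[of _ ?px] exI[of _ ?py] exI[of _ ?g]) (simp add: pts exI[of _ "1::real"])
qed

lemma spans_after_shift:
  assumes "\<forall>(u, v)\<in>E'. py' v - py' u \<le> b" "E' \<subseteq> V' \<times> V'" "\<forall>v\<in>V'. py v = py' v + c"
  shows "\<forall>(u, v)\<in>E'. py v - py u \<le> (b :: int)"
  using assms by fastforce

lemma bounded_rooted_drawing_attach_below:
  assumes B1: "bounded_rooted_drawing d l V1 E1 r h" and B2: "bounded_rooted_drawing d l V2 E2 w (h - 1)"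
    and V: "r \<in> V1" "w \<in> V2" "V1 \<inter> V2 = {}" and E: "finite E1" "E1 \<subseteq> V1 \<times> V1" "E2 \<subseteq> V2 \<times> V2"
    and indeg: "indeg E1 r \<le> d - 1" "indeg E2 w \<le> d - 1" "indeg E2 w = 0 \<or> 1 < h"
    and h: "0 < h" "h \<le> l" and "2 \<le> d"
  shows "bounded_rooted_drawing d l (V1 \<union> V2) (insert (w, r) (E1 \<union> E2)) r h"
proof -
  let ?b = "depth_bound d (h - 1)"
  obtain L1 px1 py1 g1 where R1: "rooted_drawing V1 E1 r L1 px1 py1 g1"
    and L1: "L1 \<le> indeg E1 r * (1 + ?b)" and spans1: "\<forall>(u, v)\<in>E1. py1 v - py1 u \<le> int (depth_bound d l + 1)"
    using B1 unfolding bounded_rooted_drawing_def by blast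
  obtain L2 px2 py2 g2 where R2: "rooted_drawing V2 E2 w L2 px2 py2 g2"
    and L2: "L2 \<le> indeg E2 w * (1 + depth_bound d (h - 1 - 1))"
    and spans2: "\<forall>(u, v)\<in>E2. py2 v - py2 u \<le> int (depth_bound d l + 1)"
    using B2 unfolding bounded_rooted_drawing_def by blast
  obtain px py g where R: "rooted_drawing (V1 \<union> V2) (insert (w, r) (E1 \<union> E2)) r (L1 + 1 + L2) px py g"
    and py: "\<forall>v\<in>V1. py v = py1 v" "\<forall>v\<in>V2. py v = py2 v - int (L1 + 1)"
    by (rule rooted_drawing_attach_below[OF R1 R2 V E(2,3)])
  have "L2 \<le> ?b" using le_depth_bound[OF L2 indeg(2)] indeg(3) by auto
  moreover have "indeg (insert (w, r) (E1 \<union> E2)) r = Suc (indeg E1 r)"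
    using indeg_attach_below[OF E V(1-3)] .
  ultimately have depth: "L1 + 1 + L2 \<le> indeg (insert (w, r) (E1 \<union> E2)) r * (1 + ?b)"
    using L1 by simp
  \<comment> \<open>the new edge spans the depth of the tree of r\<close>
  have "L1 \<le> depth_bound d h" using le_depth_bound[OF L1 indeg(1)] h(1) by blast
  also have "\<dots> \<le> depth_bound d l" using depth_bound_mono[OF \<open>2 \<le> d\<close> h(2)] .
  moreover have "py2 w = 0" "py r = 0" using R R2 unfolding rooted_drawing_def by blast+
  ultimately have "py r - py w \<le> int (depth_bound d l + 1)" using py V by auto
  then have "\<forall>(u, v)\<in>insert (w, r) (E1 \<union> E2). py v - py u \<le> int (depth_bound d l + 1)"
    using spans_after_shift[OF spans1 E(2), of py 0] spans_after_shift[OF spans2 E(3), of py "- int (L1 + 1)"] py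
    by auto
  with R depth show ?thesis unfolding bounded_rooted_drawing_def
    by (intro exI[of _ "L1 + 1 + L2"] exI[of _ px] exI[of _ py] exI[of _ g]) (simp add: indeg_attach_below[OF E V(1-3)])
qed

lemma bounded_rooted_drawing_attach_above:
  assumes B1: "bounded_rooted_drawing d l V1 E1 r h" and B2: "bounded_rooted_drawing d l V2 E2 u l"
    and V: "r \<in> V1" "u \<in> V2" "V1 \<inter> V2 = {}" and E: "E1 \<subseteq> V1 \<times> V1" "E2 \<subseteq> V2 \<times> V2"
    and indeg: "indeg E1 r = 0" "indeg E2 u \<le> d - 1" "indeg E2 u = 0 \<or> 0 < l"
  shows "bounded_rooted_drawing d l (V1 \<union> V2) (insert (r, u) (E1 \<union> E2)) r h"
proof -
  obtain L1 px1 py1 g1 \<nu>1 where R1: "rooted_drawing V1 E1 r L1 px1 py1 g1" and "0 < \<nu>1"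
    and above1: "\<forall>p\<in>drawing_points V1 E1 px1 py1 g1. \<nu>1 * fst p \<le> snd p"
    and spans1: "\<forall>(u, v)\<in>E1. py1 v - py1 u \<le> int (depth_bound d l + 1)"
    using B1 indeg(1) unfolding bounded_rooted_drawing_def by blast
  obtain L2 px2 py2 g2 where R2: "rooted_drawing V2 E2 u L2 px2 py2 g2"
    and L2: "L2 \<le> indeg E2 u * (1 + depth_bound d (l - 1))"
    and spans2: "\<forall>(u, v)\<in>E2. py2 v - py2 u \<le> int (depth_bound d l + 1)"
    using B2 unfolding bounded_rooted_drawing_def by blast
  obtain px py g \<nu> where R: "rooted_drawing (V1 \<union> V2) (insert (r, u) (E1 \<union> E2)) r 0 px py g"
    and above: "0 < \<nu>" "\<forall>p\<in>drawing_points (V1 \<union> V2) (insert (r, u) (E1 \<union> E2)) px py g. \<nu> * fst p \<le> snd p"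
    and py: "\<forall>v\<in>V1. py v = py1 v" "\<forall>v\<in>V2. py v = py2 v + int (L2 + 1)"
    by (rule rooted_drawing_attach_above[OF R1 \<open>0 < \<nu>1\<close> above1 R2 V E])
  \<comment> \<open>the new edge spans the depth of the tree of u\<close>
  have "L2 \<le> depth_bound d l" using le_depth_bound[OF L2 indeg(2)] indeg(3) by auto
  moreover have "py2 u = 0" "py r = 0" using R R2 unfolding rooted_drawing_def by blast+
  ultimately have "py u - py r \<le> int (depth_bound d l + 1)" using py V by auto
  then have "\<forall>(v, v')\<in>insert (r, u) (E1 \<union> E2). py v' - py v \<le> int (depth_bound d l + 1)"
    using spans_after_shift[OF spans1 E(1), of py 0] spans_after_shift[OF spans2 E(2), of py "int (L2 + 1)"] py
    by auto
  with R above show ?thesis unfolding bounded_rooted_drawing_def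
    by (intro exI[of _ "0::nat"] exI[of _ px] exI[of _ py] exI[of _ g]) auto
qed

definition bounded_tree :: "nat \<Rightarrow> nat \<Rightarrow> 'a set \<Rightarrow> ('a \<times> 'a) set \<Rightarrow> 'a \<Rightarrow> nat \<Rightarrow> bool" where
  "bounded_tree d l V E r h \<longleftrightarrow> directed_tree V E \<and> r \<in> V \<and> (\<forall>v\<in>V. vdegree E v \<le> d) \<and>
     (\<forall>p. dpath V E p \<longrightarrow> length p - 1 \<le> l) \<and> (\<forall>p. dpath V E p \<and> last p = r \<longrightarrow> length p - 1 \<le> h) \<and>
     h \<le> l"

lemma bounded_subtree:
  assumes B: "bounded_tree d l V E r h" and T': "directed_tree V' E'" "V' \<subset> V" "E' \<subseteq> E"
    and r': "r' \<in> V'" "\<forall>p. dpath V' E' p \<and> last p = r' \<longrightarrow> length p - 1 \<le> h'" "h' \<le> l"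
  shows "bounded_tree d l V' E' r' h'" and "card V' < card V"
proof -
  have fV: "finite V" and fE: "finite E"
    using B directed_tree_finite_edges unfolding bounded_tree_def directed_tree_def by auto
  have "vdegree E' v \<le> d" if "v \<in> V'" for v
    using B vdegree_mono[OF fE T'(3), of v] that T'(2) unfolding bounded_tree_def by fastforce
  moreover have "length p - 1 \<le> l" if "dpath V' E' p" for p
    using B dpath_mono[OF that] T'(2,3) unfolding bounded_tree_def by blast
  ultimately show "bounded_tree d l V' E' r' h'" unfolding bounded_tree_def using T'(1) r' by blast
  show "card V' < card V" using T'(2) by (rule psubset_card_mono[OF fV])
qed

lemma bounded_tree_split_below:
  assumes B: "bounded_tree d l V E r h" and wr: "(w, r) \<in> E"
  obtains V1 E1 V2 E2 where "bounded_tree d l V1 E1 r h" "bounded_tree d l V2 E2 w (h - 1)"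
    "card V1 < card V" "card V2 < card V" "V = V1 \<union> V2" "E = insert (w, r) (E1 \<union> E2)"
    "V1 \<inter> V2 = {}" "finite E1" "E1 \<subseteq> V1 \<times> V1" "E2 \<subseteq> V2 \<times> V2"
    "indeg E1 r \<le> d - 1" "indeg E2 w \<le> d - 1" "indeg E2 w = 0 \<or> 1 < h" "0 < h"
proof -
  have T: "directed_tree V E" and deg: "\<forall>v\<in>V. vdegree E v \<le> d"
    and paths_r: "\<forall>p. dpath V E p \<and> last p = r \<longrightarrow> length p - 1 \<le> h" and "h \<le> l"
    using B unfolding bounded_tree_def by auto
  obtain V2 E2 V1 E1 where T2: "directed_tree V2 E2" and T1: "directed_tree V1 E1"
    and V: "w \<in> V2" "r \<in> V1" "V2 \<inter> V1 = {}" "V = V2 \<union> V1"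
    and E: "E = insert (w, r) (E2 \<union> E1)" "(w, r) \<notin> E2 \<union> E1"
    by (rule directed_tree_split[OF T wr])
  have fE: "finite E" by (rule directed_tree_finite_edges[OF T])
  have E1: "E1 \<subseteq> V1 \<times> V1" "E1 \<subseteq> E" and E2: "E2 \<subseteq> V2 \<times> V2" "E2 \<subseteq> E"
    using T1 T2 E unfolding directed_tree_def by auto
  have wr_path: "dpath V E [w, r]" using wr V by (auto intro: dpath_edge)
  have sub: "V1 \<subset> V" "V2 \<subset> V" using V by auto
  have paths_w: "\<forall>p. dpath V2 E2 p \<and> last p = w \<longrightarrow> length p - 1 \<le> h - 1"
  proof (intro allI impI, elim conjE)
    fix p assume p: "dpath V2 E2 p" "last p = w"
    have "dpath V E p" using dpath_mono[OF p(1)] V(4) E2(2) by blast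
    moreover have "(last p, r) \<in> E" "r \<in> V" using p(2) wr V by auto
    ultimately have "dpath V E (p @ [r])" by (rule dpath_snoc)
    then show "length p - 1 \<le> h - 1" using paths_r by fastforce
  qed
  have "h - 1 \<le> l" using \<open>h \<le> l\<close> by simp
  note B2 = bounded_subtree[OF B T2 sub(2) E2(2) V(1) paths_w this]
  have "\<forall>p. dpath V1 E1 p \<and> last p = r \<longrightarrow> length p - 1 \<le> h"
    using paths_r dpath_mono sub(1) E1(2) by blast
  note B1 = bounded_subtree[OF B T1 sub(1) E1(2) V(2) this \<open>h \<le> l\<close>]
  have "indeg E1 r < vdegree E r" "indeg E2 w < vdegree E w"
    using indeg_less_vdegree[OF fE E1(2), of "(w, r)"] indeg_less_vdegree[OF fE E2(2), of "(w, r)"] wr E by auto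
  moreover have "vdegree E r \<le> d" "vdegree E w \<le> d" using deg V by auto
  ultimately have indeg: "indeg E1 r \<le> d - 1" "indeg E2 w \<le> d - 1" by auto
  have h_edge: "indeg E2 w = 0 \<or> 1 < h"
  proof (cases "indeg E2 w = 0")
    case False
    moreover have "finite E2" using fE E2(2) finite_subset by blast
    ultimately obtain x where "(x, w) \<in> E2" using indeg_eq_0_iff[of E2 w] by auto
    then have "dpath V E [x, w, r]" using wr_path E2 V(4) by (auto simp: dpath_def nth_Cons split: nat.splits)
    then show ?thesis using paths_r by fastforce
  qed simp
  have "0 < h" using paths_r wr_path by fastforce
  have "finite E1" using fE E1(2) finite_subset by blast
  have VE: "V = V1 \<union> V2" "E = insert (w, r) (E1 \<union> E2)" "V1 \<inter> V2 = {}" using V E by auto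
  show ?thesis
    by (rule that[OF B1(1) B2(1) B1(2) B2(2) VE \<open>finite E1\<close> E1(1) E2(1) indeg h_edge \<open>0 < h\<close>])
qed

lemma bounded_tree_split_above:
  assumes B: "bounded_tree d l V E r h" and ru: "(r, u) \<in> E" and source: "\<forall>w. (w, r) \<notin> E"
  obtains V1 E1 V2 E2 where "bounded_tree d l V1 E1 r h" "bounded_tree d l V2 E2 u l"
    "card V1 < card V" "card V2 < card V" "V = V1 \<union> V2" "E = insert (r, u) (E1 \<union> E2)"
    "V1 \<inter> V2 = {}" "E1 \<subseteq> V1 \<times> V1" "E2 \<subseteq> V2 \<times> V2"
    "indeg E1 r = 0" "indeg E2 u \<le> d - 1" "indeg E2 u = 0 \<or> 0 < l"
proof -
  have T: "directed_tree V E" and deg: "\<forall>v\<in>V. vdegree E v \<le> d"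
    and paths: "\<forall>p. dpath V E p \<longrightarrow> length p - 1 \<le> l"
    and paths_r: "\<forall>p. dpath V E p \<and> last p = r \<longrightarrow> length p - 1 \<le> h" and "h \<le> l"
    using B unfolding bounded_tree_def by auto
  obtain V1 E1 V2 E2 where T1: "directed_tree V1 E1" and T2: "directed_tree V2 E2"
    and V: "r \<in> V1" "u \<in> V2" "V1 \<inter> V2 = {}" "V = V1 \<union> V2"
    and E: "E = insert (r, u) (E1 \<union> E2)" "(r, u) \<notin> E1 \<union> E2"
    by (rule directed_tree_split[OF T ru])
  have fE: "finite E" by (rule directed_tree_finite_edges[OF T])
  have E1: "E1 \<subseteq> V1 \<times> V1" "E1 \<subseteq> E" and E2: "E2 \<subseteq> V2 \<times> V2" "E2 \<subseteq> E"
    using T1 T2 E unfolding directed_tree_def by auto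
  have sub: "V1 \<subset> V" "V2 \<subset> V" using V by auto
  have "\<forall>p. dpath V1 E1 p \<and> last p = r \<longrightarrow> length p - 1 \<le> h"
    using paths_r dpath_mono sub(1) E1(2) by blast
  note B1 = bounded_subtree[OF B T1 sub(1) E1(2) V(1) this \<open>h \<le> l\<close>]
  have paths2: "\<forall>p. dpath V2 E2 p \<longrightarrow> length p - 1 \<le> l" using paths dpath_mono sub(2) E2(2) by blast
  then have "\<forall>p. dpath V2 E2 p \<and> last p = u \<longrightarrow> length p - 1 \<le> l" by blast
  note B2 = bounded_subtree[OF B T2 sub(2) E2(2) V(2) this order_refl]
  have "finite E1" "finite E2" using fE E1(2) E2(2) finite_subset by blast+
  have indeg1: "indeg E1 r = 0" using indeg_eq_0_iff[OF \<open>finite E1\<close>] source E1(2) by blast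
  have "(r, u) \<in> E - E2" using ru E(2) by blast
  then have "indeg E2 u < vdegree E u" using indeg_less_vdegree[OF fE E2(2)] by simp
  moreover have "vdegree E u \<le> d" using deg V by blast
  ultimately have indeg2: "indeg E2 u \<le> d - 1" by linarith
  have l_edge: "indeg E2 u = 0 \<or> 0 < l"
  proof (cases "indeg E2 u = 0")
    case False
    then obtain x where "(x, u) \<in> E2" using indeg_eq_0_iff[of E2 u] \<open>finite E2\<close> by auto
    then have "dpath V2 E2 [x, u]" using E2 by (auto intro: dpath_edge)
    then show ?thesis using paths2 by fastforce
  qed simp
  show ?thesis by (rule that[OF B1(1) B2(1) B1(2) B2(2) V(4) E(1) V(3) E1(1) E2(1) indeg1 indeg2 l_edge])
qed

lemma bounded_rooted_drawing_exists:
  assumes "bounded_tree d l V E r h" "2 \<le> d"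
  shows "bounded_rooted_drawing d l V E r h"
  using assms(1)
proof (induction "card V" arbitrary: V E r h rule: less_induct)
  case less
  have T: "directed_tree V E" and r: "r \<in> V" and "h \<le> l"
    using less.prems unfolding bounded_tree_def by auto
  show ?case
  proof (cases "E = {}")
    case True
    then have "card V = 1" using T unfolding directed_tree_def by simp
    then have "V = {r}" using r by (metis card_1_singletonE singletonD)
    then show ?thesis using True bounded_rooted_drawing_singleton by simp
  next
    case False
    then consider w where "(w, r) \<in> E" | u where "(r, u) \<in> E" "\<forall>w. (w, r) \<notin> E"
      using directed_tree_edge_at[OF T r] by blast
    then show ?thesis
    proof cases
      case (1 w)
      obtain V1 E1 V2 E2
        where B: "bounded_tree d l V1 E1 r h" "bounded_tree d l V2 E2 w (h - 1)"
          and "card V1 < card V" "card V2 < card V"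
          and split: "V = V1 \<union> V2" "E = insert (w, r) (E1 \<union> E2)" "V1 \<inter> V2 = {}" "finite E1"
            "E1 \<subseteq> V1 \<times> V1" "E2 \<subseteq> V2 \<times> V2"
          and bounds: "indeg E1 r \<le> d - 1" "indeg E2 w \<le> d - 1" "indeg E2 w = 0 \<or> 1 < h" "0 < h"
        by (rule bounded_tree_split_below[OF less.prems 1])
      have "r \<in> V1" "w \<in> V2" using B unfolding bounded_tree_def by blast+
      then have "bounded_rooted_drawing d l (V1 \<union> V2) (insert (w, r) (E1 \<union> E2)) r h"
        using bounded_rooted_drawing_attach_below[OF less.hyps[OF \<open>card V1 < card V\<close> B(1)]
            less.hyps[OF \<open>card V2 < card V\<close> B(2)]] split(3-6) bounds \<open>h \<le> l\<close> assms(2)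
        by blast
      then show ?thesis using split(1,2) by simp
    next
      case (2 u)
      obtain V1 E1 V2 E2
        where B: "bounded_tree d l V1 E1 r h" "bounded_tree d l V2 E2 u l"
          and "card V1 < card V" "card V2 < card V"
          and split: "V = V1 \<union> V2" "E = insert (r, u) (E1 \<union> E2)" "V1 \<inter> V2 = {}"
            "E1 \<subseteq> V1 \<times> V1" "E2 \<subseteq> V2 \<times> V2"
          and bounds: "indeg E1 r = 0" "indeg E2 u \<le> d - 1" "indeg E2 u = 0 \<or> 0 < l"
        by (rule bounded_tree_split_above[OF less.prems 2])
      have "r \<in> V1" "u \<in> V2" using B unfolding bounded_tree_def by blast+
      then have "bounded_rooted_drawing d l (V1 \<union> V2) (insert (r, u) (E1 \<union> E2)) r h"
        using bounded_rooted_drawing_attach_above[OF less.hyps[OF \<open>card V1 < card V\<close> B(1)]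
            less.hyps[OF \<open>card V2 < card V\<close> B(2)]] split(3-5) bounds
        by blast
      then show ?thesis using split(1,2) by simp
    qed
  qed
qed

section \<open>The span of a directed tree\<close>

lemma upward_curve_snd_less:
  assumes "upward_curve \<gamma> P Q"
  shows "snd P < snd Q"
proof -
  have "strict_mono_on {0..1} (\<lambda>t. snd (\<gamma> t))" "P = \<gamma> 0" "Q = \<gamma> 1"
    using assms unfolding upward_curve_def pathstart_def pathfinish_def by auto
  then show ?thesis using strict_mono_onD[of "{0..1}" "\<lambda>t. snd (\<gamma> t)" 0 1] by simp
qed

lemma upward_span_le:
  assumes D: "upward_layered_drawing V E px py g" and E: "finite E" "E \<noteq> {}"
    and spans: "\<forall>(u, v)\<in>E. py v - py u \<le> int s"
  shows "upward_span V E \<le> s"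
proof -
  obtain u v where uv: "(u, v) \<in> E" using E(2) by auto
  then have "py u < py v"
    using D upward_curve_snd_less unfolding upward_layered_drawing_iff vertex_point_def by fastforce
  moreover have "py v - py u \<le> drawing_span E py"
    unfolding drawing_span_def using E(1) uv by (auto intro: Max_ge)
  moreover have "drawing_span E py \<le> int s"
    unfolding drawing_span_def using E spans by (auto simp: Max_le_iff)
  ultimately have "drawing_span E py = int (nat (drawing_span E py))" "nat (drawing_span E py) \<le> s"
    by auto
  moreover have "upward_span V E \<le> nat (drawing_span E py)"
    unfolding upward_span_def by (rule Least_le) (use D calculation(1) in blast)
  ultimately show ?thesis by simp
qed

lemma bounded_tree_of_directed_tree:
  assumes T: "directed_tree V E" and r: "r \<in> V"
  shows "bounded_tree (graph_degree V E) (longest_path_length V E) V E r (longest_path_length V E)"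
proof -
  have fV: "finite V" and acyc: "acyclic E" using T unfolding directed_tree_def by auto
  have "\<forall>v\<in>V. vdegree E v \<le> graph_degree V E" unfolding graph_degree_def using fV by simp
  moreover have "\<forall>p. dpath V E p \<longrightarrow> length p - 1 \<le> longest_path_length V E"
    using dpath_length_le_longest_path_length[OF fV acyc] by blast
  ultimately show ?thesis unfolding bounded_tree_def using T r by blast
qed

lemma edges_nonempty_if_longest_path_length_pos:
  assumes T: "directed_tree V E" and "1 \<le> longest_path_length V E"
  shows "E \<noteq> {}"
proof -
  have "finite V" "acyclic E" "V \<noteq> {}" using T unfolding directed_tree_def by auto
  then obtain r where "r \<in> V" by blast
  with \<open>finite V\<close> \<open>acyclic E\<close> obtain p where "dpath V E p" "length p - 1 = longest_path_length V E"
    by (rule longest_path_length_attained)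
  then have "(p ! 0, p ! 1) \<in> E" using assms(2) unfolding dpath_def by auto
  then show ?thesis by blast
qed

theorem mainTheorem9:
  "\<exists>c::real. c > 0 \<and>
     (\<forall>(V::nat set) E. directed_tree V E \<longrightarrow> graph_degree V E \<ge> 3 \<longrightarrow>
        longest_path_length V E \<ge> 1 \<longrightarrow>
        real (upward_span V E) \<le> c * (real (graph_degree V E) - 1) ^ longest_path_length V E)"
proof (intro exI[of _ 2] conjI allI impI)
  fix V :: "nat set" and E
  assume T: "directed_tree V E" and d: "graph_degree V E \<ge> 3" and l: "longest_path_length V E \<ge> 1"
  define d where "d = graph_degree V E"
  define l where "l = longest_path_length V E"
  obtain r where "r \<in> V" using T unfolding directed_tree_def by blast
  with T have "bounded_tree d l V E r l" unfolding d_def l_def by (rule bounded_tree_of_directed_tree)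
  moreover have "2 \<le> d" using d unfolding d_def by simp
  ultimately have "bounded_rooted_drawing d l V E r l" by (rule bounded_rooted_drawing_exists)
  then obtain L px py g where "rooted_drawing V E r L px py g"
    and spans: "\<forall>(u, v)\<in>E. py v - py u \<le> int (depth_bound d l + 1)"
    unfolding bounded_rooted_drawing_def by blast
  then have "upward_layered_drawing V E px py g" unfolding rooted_drawing_def proper_drawing_def by blast
  then have "upward_span V E \<le> depth_bound d l + 1"
    using directed_tree_finite_edges[OF T] edges_nonempty_if_longest_path_length_pos[OF T l] spans
    by (rule upward_span_le)
  also have "\<dots> \<le> 2 * (d - 1) ^ l" using depth_bound_le_power[of d l] d unfolding d_def by simp
  finally have "real (upward_span V E) \<le> real (2 * (d - 1) ^ l)" by (simp only: of_nat_le_iff)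
  also have "\<dots> = 2 * (real d - 1) ^ l" using d unfolding d_def by (simp add: of_nat_diff)
  finally show "real (upward_span V E) \<le> 2 * (real (graph_degree V E) - 1) ^ longest_path_length V E"
    unfolding d_def l_def .
qed simp

end
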